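(* Let $M\ge 1$, $1\le N\le M$. For every particle configuration $x=(x_1<\dots<x_N)\subset\{1,\dots,M\}$ and every hole configuration $\overline{x}=(\overline{x_1}<\dots<\overline{x_N})\subset\{1,\dots,M\}$, the following identities hold (as identities of rational functions in $u_1,\dots,u_N$; in particular the right-hand sides are polynomials symmetric in $u_1,\dots,u_N$): \begin{align*} \langle x_1\cdots x_N|B(u_N)\cdots B(u_1)|\Omega\rangle&=G_x(u_1,\dots,u_N),\\ \langle\Omega|C(u_1)\cdots C(u_N)|x_1\cdots x_N\rangle&=\overline{G}_x(u_1,\dots,u_N),\\ \langle 1\cdots M|B(u_1)\cdots B(u_N)|\overline{x_1}\cdots\overline{x_N}\rangle&=H_{\overline{x}}(u_1,\dots,u_N),\\ \langle\overline{x_1}\cdots\overline{x_N}|C(u_N)\cdots C(u_1)|1\cdots M\rangle&=\overline{H}_{\overline{x}}(u_1,\dots,u_N). \end{align*}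
   Context: Fix complex parameters $t,a,b,c,d,e,f$, all nonzero, with $t\neq 1$, satisfying $cd+af=0$ and $tcd+be=0$. Let $W_a\cong V_j\cong\mathbb{C}^2$ with orthonormal basis $|0\rangle,|1\rangle$ and dual basis $\langle 0|,\langle 1|$. For a spectral parameter $u$, the $L$-operator $L_{aj}(u)\in\mathrm{End}(W_a\otimes V_j)$ is defined by its matrix elements $[L(u)]^{\gamma\delta}_{\alpha\beta}:={}_a\langle\gamma|{}_j\langle\delta|L_{aj}(u)|\alpha\rangle_a|\beta\rangle_j$: $[L]^{00}_{00}=au+b$, $[L]^{01}_{01}=atu+b$, $[L]^{01}_{10}=(1-t)cu$, $[L]^{10}_{01}=(1-t)d$, $[L]^{10}_{10}=eu+f$, $[L]^{11}_{11}=eu+tf$, all other matrix elements being $0$. For $M$ sites, the monodromy matrix is $T_a(u)=L_{aM}(u)\cdots L_{a1}(u)\in\mathrm{End}(W_a\otimes V_1\otimes\cdots\otimes V_M)$, and $B(u)={}_a\langle 0|T_a(u)|1\rangle_a$, $C(u)={}_a\langle 1|T_a(u)|0\rangle_a$ (operators on $V_1\otimes\cdots\otimes V_M$). Let $|\Omega\rangle=|0\rangle_1\otimes\cdots\otimes|0\rangle_M$, $|1\cdots M\rangle=|1\rangle_1\otimes\cdots\otimes|1\rangle_M$, and $\langle\Omega|,\langle 1\cdots M|$ their duals. For $1\le x_1<\dots<x_N\le M$, $|x_1\cdots x_N\rangle$ is the basis tensor with $|1\rangle$ at sites $x_1,\dots,x_N$ and $|0\rangle$ elsewhere; for $1\le\overline{x_1}<\dots<\overline{x_N}\le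 M$, $|\overline{x_1}\cdots\overline{x_N}\rangle$ is the basis tensor with $|0\rangle$ at sites $\overline{x_1},\dots,\overline{x_N}$ and $|1\rangle$ elsewhere; bras are the corresponding dual basis vectors. For $\sigma\in S_N$ let $\mathrm{Inv}(\sigma)=\{(j,k):1\le j<k\le N,\ \sigma(j)>\sigma(k)\}$. Define $G_x(u_1,\dots,u_N)=\prod_{j=1}^N\frac{(1-t)cu_j(au_j+b)^M}{eu_j+f}\prod_{1\le j<k\le N}\frac{tu_j-u_k}{u_j-u_k}\sum_{\sigma\in S_N}\prod_{(j,k)\in\mathrm{Inv}(\sigma)}\frac{u_{\sigma(k)}-tu_{\sigma(j)}}{tu_{\sigma(k)}-u_{\sigma(j)}}\prod_{j=1}^N\Big(\frac{eu_{\sigma(j)}+f}{au_{\sigma(j)}+b}\Big)^{x_j}$; $\overline{G}_x(u_1,\dots,u_N)=\prod_{j=1}^N\frac{(1-t)d(eu_j+f)^M}{au_j+b}\prod_{1\le j<k\le N}\frac{u_j-tu_k}{u_j-u_k}\sum_{\sigma\in S_N}\prod_{(j,k)\in\mathrm{Inv}(\sigma)}\frac{tu_{\sigma(k)}-u_{\sigma(j)}}{u_{\sigma(k)}-tu_{\sigma(j)}}\prod_{j=1}^N\Big(\frac{au_{\sigma(j)}+b}{eu_{\sigma(j)}+f}\Big)^{x_j}$; $H_{\overline{x}}(u_1,\dots,u_N)=\prod_{j=1}^N\frac{(1-t)cu_j(atu_j+b)^M}{eu_j+tf}\prod_{1\le j<k\le N}\frac{u_j-tu_k}{t(u_j-u_k)}\sum_{\sigma\in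 S_N}\prod_{(j,k)\in\mathrm{Inv}(\sigma)}\frac{tu_{\sigma(k)}-u_{\sigma(j)}}{u_{\sigma(k)}-tu_{\sigma(j)}}\prod_{j=1}^N\Big(\frac{eu_{\sigma(j)}+tf}{atu_{\sigma(j)}+b}\Big)^{\overline{x_j}}$; $\overline{H}_{\overline{x}}(u_1,\dots,u_N)=\prod_{j=1}^N\frac{(1-t)d(eu_j+tf)^M}{atu_j+b}\prod_{1\le j<k\le N}\frac{tu_j-u_k}{t(u_j-u_k)}\sum_{\sigma\in S_N}\prod_{(j,k)\in\mathrm{Inv}(\sigma)}\frac{u_{\sigma(k)}-tu_{\sigma(j)}}{tu_{\sigma(k)}-u_{\sigma(j)}}\prod_{j=1}^N\Big(\frac{atu_{\sigma(j)}+b}{eu_{\sigma(j)}+tf}\Big)^{\overline{x_j}}$. *)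

theory Defs
  imports Complex_Main "HOL-Combinatorics.Permutations"
begin

text \<open>Convention: the basis vector |0> is encoded by False, |1> by True.
  A basis vector of V_1 (x) ... (x) V_M is encoded by the set S \<subseteq> {1..M}
  of sites carrying |1>.  Operators on V_1 (x) ... (x) V_M are encoded by
  their matrix elements  Op S' S = <S'| Op |S>.\<close>

text \<open>Matrix elements [L(u)]^{gamma delta}_{alpha beta}: arguments u gamma delta alpha beta.\<close>
definition Lent :: "complex \<Rightarrow> complex \<Rightarrow> complex \<Rightarrow> complex \<Rightarrow> complex \<Rightarrow> complex \<Rightarrow> complex
    \<Rightarrow> complex \<Rightarrow> bool \<Rightarrow> bool \<Rightarrow> bool \<Rightarrow> bool \<Rightarrow> complex" where
  "Lent t a b c d e f u \<gamma> \<delta> \<alpha> \<beta> =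
    (if \<gamma> = False \<and> \<delta> = False \<and> \<alpha> = False \<and> \<beta> = False then a*u + b
     else if \<gamma> = False \<and> \<delta> = True \<and> \<alpha> = False \<and> \<beta> = True then a*t*u + b
     else if \<gamma> = False \<and> \<delta> = True \<and> \<alpha> = True \<and> \<beta> = False then (1 - t)*c*u
     else if \<gamma> = True \<and> \<delta> = False \<and> \<alpha> = False \<and> \<beta> = True then (1 - t)*d
     else if \<gamma> = True \<and> \<delta> = False \<and> \<alpha> = True \<and> \<beta> = False then e*u + f
     else if \<gamma> = True \<and> \<delta> = True \<and> \<alpha> = True \<and> \<beta> = True then e*u + t*f
     else 0)"

text \<open>Monodromy matrix T_a(u) = L_{am}(u) ... L_{a1}(u) on m sites:
  mono ... m u gamma alpha S' S = <gamma|_a <S'| T_a(u) |alpha>_a |S>,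
  where only the membership of the sites 1..m in S', S matters.\<close>
fun mono :: "complex \<Rightarrow> complex \<Rightarrow> complex \<Rightarrow> complex \<Rightarrow> complex \<Rightarrow> complex \<Rightarrow> complex
    \<Rightarrow> nat \<Rightarrow> complex \<Rightarrow> bool \<Rightarrow> bool \<Rightarrow> nat set \<Rightarrow> nat set \<Rightarrow> complex" where
  "mono t a b c d e f 0 u \<gamma> \<alpha> S' S = (if \<gamma> = \<alpha> then 1 else 0)"
| "mono t a b c d e f (Suc m) u \<gamma> \<alpha> S' S =
     (\<Sum>\<beta>\<in>{False, True}. Lent t a b c d e f u \<gamma> (Suc m \<in> S') \<beta> (Suc m \<in> S)
                          * mono t a b c d e f m u \<beta> \<alpha> S' S)"

definition Bop where "Bop t a b c d e f M u = mono t a b c d e f M u False True"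
definition Cop where "Cop t a b c d e f M u = mono t a b c d e f M u True False"

definition opmul :: "nat \<Rightarrow> (nat set \<Rightarrow> nat set \<Rightarrow> complex) \<Rightarrow> (nat set \<Rightarrow> nat set \<Rightarrow> complex)
    \<Rightarrow> nat set \<Rightarrow> nat set \<Rightarrow> complex" where
  "opmul M A B S' S = (\<Sum>R\<in>Pow {1..M}. A S' R * B R S)"

fun oplist :: "nat \<Rightarrow> (nat set \<Rightarrow> nat set \<Rightarrow> complex) list \<Rightarrow> nat set \<Rightarrow> nat set \<Rightarrow> complex" where
  "oplist M [] = (\<lambda>S' S. if S' = S then 1 else 0)"
| "oplist M (A # As) = opmul M A (oplist M As)"

definition Inv :: "nat \<Rightarrow> (nat \<Rightarrow> nat) \<Rightarrow> (nat \<times> nat) set" where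
  "Inv N \<sigma> = {(j, k). 1 \<le> j \<and> j < k \<and> k \<le> N \<and> \<sigma> j > \<sigma> k}"

definition Gfun :: "complex \<Rightarrow> complex \<Rightarrow> complex \<Rightarrow> complex \<Rightarrow> complex \<Rightarrow> complex \<Rightarrow> complex
    \<Rightarrow> nat \<Rightarrow> nat \<Rightarrow> (nat \<Rightarrow> nat) \<Rightarrow> (nat \<Rightarrow> complex) \<Rightarrow> complex" where
  "Gfun t a b c d e f M N x u =
    (\<Prod>j=1..N. (1 - t)*c*u j*(a*u j + b)^M / (e*u j + f))
    * (\<Prod>j=1..N. \<Prod>k=j+1..N. (t*u j - u k) / (u j - u k))
    * (\<Sum>\<sigma>\<in>{\<sigma>. \<sigma> permutes {1..N}}.
         (\<Prod>(j, k)\<in>Inv N \<sigma>. (u (\<sigma> k) - t*u (\<sigma> j)) / (t*u (\<sigma> k) - u (\<sigma> j)))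
         * (\<Prod>j=1..N. ((e*u (\<sigma> j) + f) / (a*u (\<sigma> j) + b))^(x j)))"

definition Gbar :: "complex \<Rightarrow> complex \<Rightarrow> complex \<Rightarrow> complex \<Rightarrow> complex \<Rightarrow> complex \<Rightarrow> complex
    \<Rightarrow> nat \<Rightarrow> nat \<Rightarrow> (nat \<Rightarrow> nat) \<Rightarrow> (nat \<Rightarrow> complex) \<Rightarrow> complex" where
  "Gbar t a b c d e f M N x u =
    (\<Prod>j=1..N. (1 - t)*d*(e*u j + f)^M / (a*u j + b))
    * (\<Prod>j=1..N. \<Prod>k=j+1..N. (u j - t*u k) / (u j - u k))
    * (\<Sum>\<sigma>\<in>{\<sigma>. \<sigma> permutes {1..N}}.
         (\<Prod>(j, k)\<in>Inv N \<sigma>. (t*u (\<sigma> k) - u (\<sigma> j)) / (u (\<sigma> k) - t*u (\<sigma> j)))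
         * (\<Prod>j=1..N. ((a*u (\<sigma> j) + b) / (e*u (\<sigma> j) + f))^(x j)))"

definition Hfun :: "complex \<Rightarrow> complex \<Rightarrow> complex \<Rightarrow> complex \<Rightarrow> complex \<Rightarrow> complex \<Rightarrow> complex
    \<Rightarrow> nat \<Rightarrow> nat \<Rightarrow> (nat \<Rightarrow> nat) \<Rightarrow> (nat \<Rightarrow> complex) \<Rightarrow> complex" where
  "Hfun t a b c d e f M N xb u =
    (\<Prod>j=1..N. (1 - t)*c*u j*(a*t*u j + b)^M / (e*u j + t*f))
    * (\<Prod>j=1..N. \<Prod>k=j+1..N. (u j - t*u k) / (t*(u j - u k)))
    * (\<Sum>\<sigma>\<in>{\<sigma>. \<sigma> permutes {1..N}}.
         (\<Prod>(j, k)\<in>Inv N \<sigma>. (t*u (\<sigma> k) - u (\<sigma> j)) / (u (\<sigma> k) - t*u (\<sigma> j)))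
         * (\<Prod>j=1..N. ((e*u (\<sigma> j) + t*f) / (a*t*u (\<sigma> j) + b))^(xb j)))"

definition Hbar :: "complex \<Rightarrow> complex \<Rightarrow> complex \<Rightarrow> complex \<Rightarrow> complex \<Rightarrow> complex \<Rightarrow> complex
    \<Rightarrow> nat \<Rightarrow> nat \<Rightarrow> (nat \<Rightarrow> nat) \<Rightarrow> (nat \<Rightarrow> complex) \<Rightarrow> complex" where
  "Hbar t a b c d e f M N xb u =
    (\<Prod>j=1..N. (1 - t)*d*(e*u j + t*f)^M / (a*t*u j + b))
    * (\<Prod>j=1..N. \<Prod>k=j+1..N. (t*u j - u k) / (t*(u j - u k)))
    * (\<Sum>\<sigma>\<in>{\<sigma>. \<sigma> permutes {1..N}}.
         (\<Prod>(j, k)\<in>Inv N \<sigma>. (u (\<sigma> k) - t*u (\<sigma> j)) / (t*u (\<sigma> k) - u (\<sigma> j)))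
         * (\<Prod>j=1..N. ((a*t*u (\<sigma> j) + b) / (e*u (\<sigma> j) + t*f))^(xb j)))"

end

theory Submission
  imports Defs
begin

text \<open>All four identities are proved by induction on the number M of sites, in the manner of
  the algebraic Bethe ansatz. Splitting off the last site writes a B-operator on M+1 sites as a
  combination of the B- and D-operators on M sites, with L-operator entries as coefficients. If
  site M+1 carries no particle, it only contributes the factor (a u_j + b) for every spectral
  parameter. If it carries the last particle, exactly one of the B-operators has been replaced by
  a D-operator; moving that D to the vacuum through the other B's by the exchange relation from
  the RTT relation (which is where cd + af = 0 and tcd + be = 0 enter, through the local
  Yang-Baxter equation of the six-vertex R-matrix) produces a sum over the parameter u_l that was
  used on site M+1. This is the expansion of the symmetrized sum over S_N according to the value
  l = \<sigma>(N).

  The four identities are instances of one argument: B or C applied to the vacuum or to the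
  completely filled state, acting on kets or on bras.\<close>

type_synonym vec = "nat set \<Rightarrow> complex"

definition skip :: "nat \<Rightarrow> nat \<Rightarrow> nat" where "skip l i = (if i < l then i else Suc i)"

fun chain :: "(complex \<Rightarrow> vec \<Rightarrow> vec) \<Rightarrow> vec \<Rightarrow> (nat \<Rightarrow> complex) \<Rightarrow> nat \<Rightarrow> vec" where
  "chain Y om u 0 = om"
| "chain Y om u (Suc n) = Y (u (Suc n)) (chain Y om u n)"

lemma chain_cong: "(\<forall>i\<in>{1..n}. u i = v i) \<Longrightarrow> chain Y om u n = chain Y om v n"
  by (induction n) auto

lemma chain_skip_Suc:
  assumes "k \<in> {1..n}"
  shows "Y (u (Suc n)) (chain Y om (u \<circ> skip k) (n - 1)) = chain Y om (u \<circ> skip k) n"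
  using assms by (cases n) (auto simp: skip_def)

section \<open>Exchange algebras\<close>

locale exchange_algebra =
  fixes Y X :: "complex \<Rightarrow> vec \<Rightarrow> vec" and om :: vec
    and fc gc :: "complex \<Rightarrow> complex \<Rightarrow> complex" and ev :: "complex \<Rightarrow> complex"
    and compat :: "complex \<Rightarrow> complex \<Rightarrow> bool"
  assumes Y_sum: "finite (K::nat set) \<Longrightarrow> Y w (\<lambda>S. \<Sum>k\<in>K. c k * \<Phi> k S) = (\<lambda>S. \<Sum>k\<in>K. c k * Y w (\<Phi> k) S)"
    and Y_lincomb: "Y w (\<lambda>S. c1 * \<phi> S + c2 * \<psi> S) = (\<lambda>S. c1 * Y w \<phi> S + c2 * Y w \<psi> S)"
    and Y_commute: "compat v w \<Longrightarrow> Y v (Y w \<phi>) = Y w (Y v \<phi>)"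
    and exchange: "compat v w \<Longrightarrow> X w (Y v \<phi>) = (\<lambda>S. fc v w * Y v (X w \<phi>) S + gc w v * Y w (X v \<phi>) S)"
    and X_vacuum: "X w om = (\<lambda>S. ev w * om S)"
    and coeff_identity: "compat v w \<Longrightarrow> compat w z \<Longrightarrow> compat v z \<Longrightarrow>
      fc v w * gc w z + gc w v * gc v z = gc w z * fc v z"
    and compat_sym: "compat v w \<Longrightarrow> compat w v"
begin

abbreviation chainY where "chainY \<equiv> chain Y om"

lemma Y_smult: "Y w (\<lambda>S. c * \<phi> S) = (\<lambda>S. c * Y w \<phi> S)"
  using Y_lincomb[of w c \<phi> 0 \<phi>] by simp

lemma Y_smult_plus_sum:
  assumes "finite (K::nat set)"
  shows "Y w (\<lambda>S. c0 * \<phi> S + (\<Sum>k\<in>K. c k * \<psi> k S)) = (\<lambda>S. c0 * Y w \<phi> S + (\<Sum>k\<in>K. c k * Y w (\<psi> k) S))"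
  using Y_lincomb[of w c0 \<phi> 1 "\<lambda>S. \<Sum>k\<in>K. c k * \<psi> k S"] Y_sum[OF assms] by simp

lemma X_on_chain:
  assumes "\<forall>i\<in>{1..n}. \<forall>j\<in>{1..n}. i \<noteq> j \<longrightarrow> compat (u i) (u j)" "\<forall>i\<in>{1..n}. compat (u i) w"
  shows "X w (chainY u n) = (\<lambda>S. ev w * (\<Prod>i=1..n. fc (u i) w) * chainY u n S
     + (\<Sum>k=1..n. gc w (u k) * ev (u k) * (\<Prod>i\<in>{1..n}-{k}. fc (u i) (u k))
         * Y w (chainY (u \<circ> skip k) (n-1)) S))"
  using assms
proof (induction n arbitrary: w)
  case 0
  then show ?case by (simp add: X_vacuum)
next
  case (Suc n)
  define v where "v = u (Suc n)"
  have vw: "compat v w" using Suc.prems v_def by auto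
  define C where "C k = ev (u k) * (\<Prod>i\<in>{1..n}-{k}. fc (u i) (u k))" for k
  define W where "W k = chainY (u \<circ> skip k) n" for k
  have IH: "X z (chainY u n) = (\<lambda>S. ev z * (\<Prod>i=1..n. fc (u i) z) * chainY u n S
     + (\<Sum>k=1..n. gc z (u k) * C k * Y z (chainY (u \<circ> skip k) (n-1)) S))"
    if "\<forall>i\<in>{1..n}. compat (u i) z" for z
  proof -
    have "\<forall>i\<in>{1..n}. \<forall>j\<in>{1..n}. i \<noteq> j \<longrightarrow> compat (u i) (u j)" using Suc.prems(1) by auto
    then show ?thesis using Suc.IH[of z] that by (simp add: C_def mult.assoc comp_def)
  qed
  have W: "Y v (chainY (u \<circ> skip k) (n-1)) = W k" if "1 \<le> k" "k \<le> n" for k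
    using chain_skip_Suc[of k n] that by (simp add: v_def W_def)
  have Xw: "Y v (X w (chainY u n)) = (\<lambda>S. ev w * (\<Prod>i=1..n. fc (u i) w) * chainY u (Suc n) S
       + (\<Sum>k=1..n. gc w (u k) * C k * Y w (W k) S))"
    using Suc.prems vw
    by (auto simp: IH Y_smult_plus_sum v_def W[unfolded v_def One_nat_def] Y_commute[OF vw, unfolded
        v_def]
        intro!: ext sum.cong)
  have Xv: "Y w (X v (chainY u n)) = (\<lambda>S. ev v * (\<Prod>i=1..n. fc (u i) v) * Y w (chainY u n) S
       + (\<Sum>k=1..n. gc v (u k) * C k * Y w (W k) S))"
    using Suc.prems by (auto simp: IH Y_smult_plus_sum v_def W[unfolded v_def One_nat_def] intro!:
        ext sum.cong)
  have coeff: "(fc v w * gc w (u k) + gc w v * gc v (u k)) * C k =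
      gc w (u k) * ev (u k) * (\<Prod>i\<in>{1..Suc n}-{k}. fc (u i) (u k))" if k: "k \<in> {1..n}" for k
  proof -
    have "compat w (u k)" "compat v (u k)" using Suc.prems k v_def by (auto intro: compat_sym)
    moreover have "{1..Suc n}-{k} = insert (Suc n) ({1..n}-{k})" using k by auto
    ultimately show ?thesis
      using coeff_identity[OF vw] by (simp add: C_def v_def algebra_simps)
  qed
  have last: "chainY (u \<circ> skip (Suc n)) n = chainY u n"
    by (rule chain_cong) (auto simp: skip_def)
  have split_last: "{1..Suc n}-{Suc n} = {1..n}" by auto
  have "X w (chainY u (Suc n)) = (\<lambda>S. fc v w * Y v (X w (chainY u n)) S
      + gc w v * Y w (X v (chainY u n)) S)"
    using exchange vw by (simp add: v_def)
  also have "\<dots> = (\<lambda>S. ev w * (\<Prod>i=1..Suc n. fc (u i) w) * chainY u (Suc n) S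
     + (\<Sum>k=1..Suc n. gc w (u k) * ev (u k) * (\<Prod>i\<in>{1..Suc n}-{k}. fc (u i) (u k))
         * Y w (chainY (u \<circ> skip k) (Suc n - 1)) S))"
    unfolding Xw Xv
  proof (rule ext)
    fix S
    have "(\<Sum>k=1..n. gc w (u k) * ev (u k) * (\<Prod>i\<in>{1..Suc n}-{k}. fc (u i) (u k)) * Y w (W k) S)
        = (\<Sum>k=1..n. (fc v w * gc w (u k) + gc w v * gc v (u k)) * C k * Y w (W k) S)"
      by (rule sum.cong) (simp_all add: coeff)
    then have "(\<Sum>k=1..Suc n. gc w (u k) * ev (u k) * (\<Prod>i\<in>{1..Suc n}-{k}. fc (u i) (u k))
        * Y w (chainY (u \<circ> skip k) (Suc n - 1)) S)
       = (\<Sum>k=1..n. (fc v w * gc w (u k) + gc w v * gc v (u k)) * C k * Y w (W k) S)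
         + gc w v * ev v * (\<Prod>i=1..n. fc (u i) v) * Y w (chainY u n) S"
      by (simp add: split_last[unfolded One_nat_def] last W_def v_def)
    then show "fc v w * (ev w * (\<Prod>i=1..n. fc (u i) w) * chainY u (Suc n) S
       + (\<Sum>k=1..n. gc w (u k) * C k * Y w (W k) S))
     + gc w v * (ev v * (\<Prod>i=1..n. fc (u i) v) * Y w (chainY u n) S
       + (\<Sum>k=1..n. gc v (u k) * C k * Y w (W k) S)) =
     ev w * (\<Prod>i=1..Suc n. fc (u i) w) * chainY u (Suc n) S
     + (\<Sum>k=1..Suc n. gc w (u k) * ev (u k) * (\<Prod>i\<in>{1..Suc n}-{k}. fc (u i) (u k))
         * Y w (chainY (u \<circ> skip k) (Suc n - 1)) S)"
      by (simp add: v_def algebra_simps sum_distrib_left sum.distrib)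
  qed
  finally show ?case .
qed

end

definition unskip :: "nat \<Rightarrow> nat \<Rightarrow> nat" where "unskip l i = (if i < l then i else i - 1)"

lemma skip_ne: "skip l i \<noteq> l" "l \<noteq> skip l i" by (simp_all add: skip_def)

lemma skip_inj: "skip l i = skip l j \<longleftrightarrow> i = j" by (auto simp: skip_def)

lemma skip_less: "skip l i < skip l j \<longleftrightarrow> i < j" by (auto simp: skip_def)

lemma skip_unskip: "i \<noteq> l \<Longrightarrow> skip l (unskip l i) = i" by (auto simp: skip_def unskip_def)

lemma skip_image: "l \<in> {1..Suc n} \<Longrightarrow> skip l ` {1..n} = {1..Suc n} - {l}"
proof (rule set_eqI, rule iffI)
  fix i assume "l \<in> {1..Suc n}" "i \<in> skip l ` {1..n}" then show "i \<in> {1..Suc n} - {l}"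
    by (auto simp: skip_def)
next
  fix i assume l: "l \<in> {1..Suc n}" and i: "i \<in> {1..Suc n} - {l}"
  then have "i = skip l (unskip l i)" by (simp add: skip_unskip)
  moreover have "unskip l i \<in> {1..n}" using l i by (auto simp: unskip_def)
  ultimately show "i \<in> skip l ` {1..n}" by blast
qed

lemma inj_skip: "inj (skip l)" by (auto simp: inj_def skip_inj)

lemma prod_skip:
  fixes F :: "nat \<Rightarrow> 'a::comm_monoid_mult"
  assumes "l \<in> {1..Suc n}"
  shows "(\<Prod>j=1..Suc n. F j) = F l * (\<Prod>j=1..n. F (skip l j))"
proof -
  have "{1..Suc n} = insert l (skip l ` {1..n})" using skip_image[OF assms] assms by auto
  moreover have "l \<notin> skip l ` {1..n}" using skip_ne by auto
  ultimately have "(\<Prod>j=1..Suc n. F j) = F l * (\<Prod>j\<in>skip l ` {1..n}. F j)" by simp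
  also have "(\<Prod>j\<in>skip l ` {1..n}. F j) = (\<Prod>j=1..n. F (skip l j))"
    by (rule prod.reindex[OF inj_on_subset[OF inj_skip], simplified])
  finally show ?thesis .
qed

definition ordered_pairs :: "nat \<Rightarrow> (nat \<times> nat) set" where "ordered_pairs m
    = {(j,k). 1 \<le> j \<and> j < k \<and> k \<le> m}"

lemma finite_ordered_pairs: "finite (ordered_pairs m)"
  by (rule finite_subset[of _ "{1..m} \<times> {1..m}"]) (auto simp: ordered_pairs_def)

lemma prod_nested_eq_ordered_pairs:
  fixes H :: "nat \<Rightarrow> nat \<Rightarrow> 'a::comm_monoid_mult"
  shows "(\<Prod>j=1..m. \<Prod>k=j+1..m. H j k) = (\<Prod>(j,k)\<in>ordered_pairs m. H j k)"
proof -
  have "(\<Prod>j=1..m. \<Prod>k=j+1..m. H j k) = (\<Prod>(j,k)\<in>Sigma {1..m} (\<lambda>j. {j+1..m}). H j k)"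
    by (rule prod.Sigma) auto
  also have "Sigma {1..m} (\<lambda>j. {j+1..m}) = ordered_pairs m" by (auto simp: ordered_pairs_def)
  finally show ?thesis .
qed

lemma ordered_pairs_skip_decomp:
  assumes l: "l \<in> {1..Suc n}"
  shows "ordered_pairs (Suc n) = ((\<lambda>(j,k). (skip l j, skip l k)) ` ordered_pairs n \<union>
      (\<lambda>j. (j,l)) ` {j\<in>{1..Suc n}. j < l})
           \<union> (\<lambda>k. (l,k)) ` {Suc l..Suc n}"
proof (rule set_eqI, rule iffI)
  fix p assume p: "p \<in> ordered_pairs (Suc n)"
  obtain j k where jk: "p = (j,k)" by (cases p)
  have j: "1 \<le> j" "j < k" "k \<le> Suc n" using p jk by (auto simp: ordered_pairs_def)
  show "p \<in> ((\<lambda>(j,k). (skip l j, skip l k)) ` ordered_pairs n \<union>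
      (\<lambda>j. (j,l)) ` {j\<in>{1..Suc n}. j < l}) \<union> (\<lambda>k. (l,k)) ` {Suc l..Suc n}"
  proof (cases "j = l \<or> k = l")
    case True then show ?thesis using j jk by auto
  next
    case False
    then have "(j,k) = (skip l (unskip l j), skip l (unskip l k))" by (simp add: skip_unskip)
    moreover have "(unskip l j, unskip l k) \<in> ordered_pairs n"
      using False j l by (auto simp: ordered_pairs_def unskip_def)
    ultimately show ?thesis using jk by force
  qed
next
  fix p assume "p \<in> ((\<lambda>(j,k). (skip l j, skip l k)) ` ordered_pairs n \<union>
      (\<lambda>j. (j,l)) ` {j\<in>{1..Suc n}. j < l}) \<union> (\<lambda>k. (l,k)) ` {Suc l..Suc n}"
  then show "p \<in> ordered_pairs (Suc n)" using l by (auto simp: ordered_pairs_def skip_def)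
qed

lemma prod_nested_skip:
  fixes H :: "nat \<Rightarrow> nat \<Rightarrow> 'a::comm_monoid_mult"
  assumes l: "l \<in> {1..Suc n}"
  shows "(\<Prod>j=1..Suc n. \<Prod>k=j+1..Suc n. H j k) =
     (\<Prod>j\<in>{j\<in>{1..Suc n}. j < l}. H j l) * (\<Prod>k\<in>{Suc l..Suc n}. H l k)
         * (\<Prod>j=1..n. \<Prod>k=j+1..n. H (skip l j) (skip l k))"
proof -
  let ?A = "(\<lambda>(j,k). (skip l j, skip l k)) ` ordered_pairs n"
  let ?B = "(\<lambda>j. (j,l)) ` {j\<in>{1..Suc n}. j < l}"
  let ?C = "(\<lambda>k. (l,k)) ` {Suc l..Suc n}"
  have d1: "(?A \<union> ?B) \<inter> ?C = {}" by (auto simp: skip_ne skip_ne)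
  have d2: "?A \<inter> ?B = {}" by (auto simp: skip_ne skip_ne)
  have "(\<Prod>j=1..Suc n. \<Prod>k=j+1..Suc n. H j k)
      = (\<Prod>(j,k)\<in>ordered_pairs (Suc n). H j k)" by (rule prod_nested_eq_ordered_pairs)
  also have "\<dots> = (\<Prod>(j,k)\<in>?A \<union> ?B \<union> ?C. H j k)" using ordered_pairs_skip_decomp[OF l] by simp
  also have "\<dots> = (\<Prod>(j,k)\<in>?A. H j k) * (\<Prod>(j,k)\<in>?B. H j k) * (\<Prod>(j,k)\<in>?C. H j k)"
  proof -
    have "(\<Prod>p\<in>?A \<union> ?B \<union> ?C. case_prod H p) = (\<Prod>p\<in>?A \<union> ?B. case_prod H p) * (\<Prod>p\<in>?C. case_prod H p)"
      by (rule prod.union_disjoint) (use d1 finite_ordered_pairs in auto)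
    moreover have "(\<Prod>p\<in>?A \<union> ?B. case_prod H p) = (\<Prod>p\<in>?A. case_prod H p) * (\<Prod>p\<in>?B. case_prod H p)"
      by (rule prod.union_disjoint) (use d2 finite_ordered_pairs in auto)
    ultimately show ?thesis by simp
  qed
  also have "(\<Prod>(j,k)\<in>?A. H j k) = (\<Prod>(j,k)\<in>ordered_pairs n. H (skip l j) (skip l k))"
  proof -
    have "inj_on (\<lambda>(j,k). (skip l j, skip l k)) (ordered_pairs n)"
      by (auto simp: inj_on_def skip_inj)
    then show ?thesis by (subst prod.reindex) (auto simp: case_prod_beta comp_def)
  qed
  also have "\<dots> = (\<Prod>j=1..n. \<Prod>k=j+1..n. H (skip l j) (skip l k))"
    by (rule prod_nested_eq_ordered_pairs[symmetric])
  also have "(\<Prod>(j,k)\<in>?B. H j k) = (\<Prod>j\<in>{j\<in>{1..Suc n}. j < l}. H j l)"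
    by (subst prod.reindex) (auto simp: inj_on_def)
  also have "(\<Prod>(j,k)\<in>?C. H j k) = (\<Prod>k\<in>{Suc l..Suc n}. H l k)"
    by (subst prod.reindex) (auto simp: inj_on_def)
  finally show ?thesis by (simp add: ac_simps)
qed

section \<open>Permutations classified by the image of the last point\<close>

definition perm_insert :: "nat \<Rightarrow> nat \<Rightarrow> (nat \<Rightarrow> nat) \<Rightarrow> nat \<Rightarrow> nat" where
  "perm_insert l n \<tau> j = (if j \<in> {1..n} then skip l (\<tau> j) else if j = Suc n then l else j)"

lemma perm_insert_permutes:
  assumes "\<tau> permutes {1..n}" "l \<in> {1..Suc n}"
  shows "perm_insert l n \<tau> permutes {1..Suc n}"
proof (rule inj_imp_permutes)
  have tin: "\<tau> j \<in> {1..n}" if "j \<in> {1..n}" for j using permutes_in_image[OF assms(1)] that by blast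
  show "inj_on (perm_insert l n \<tau>) {1..Suc n}"
  proof (rule inj_onI)
    fix i j assume i: "i \<in> {1..Suc n}" and j: "j \<in> {1..Suc n}" and e: "perm_insert l n \<tau> i
        = perm_insert l n \<tau> j"
    show "i = j"
    proof (cases "i \<in> {1..n}"; cases "j \<in> {1..n}")
      assume "i \<in> {1..n}" "j \<in> {1..n}"
      then show ?thesis using e permutes_inj[OF assms(1)]
        by (auto simp: perm_insert_def skip_inj inj_def)
    next
      assume "i \<in> {1..n}" "j \<notin> {1..n}"
      then show ?thesis using e j skip_ne by (auto simp: perm_insert_def)
    next
      assume "i \<notin> {1..n}" "j \<in> {1..n}"
      then show ?thesis using e i skip_ne by (auto simp: perm_insert_def)
    next
      assume "i \<notin> {1..n}" "j \<notin> {1..n}"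
      then show ?thesis using i j by auto
    qed
  qed
  show "finite {1..Suc n}" by simp
  show "perm_insert l n \<tau> x \<in> {1..Suc n}" if "x \<in> {1..Suc n}" for x
    using that assms(2) tin[of x] by (auto simp: perm_insert_def skip_def)
  show "perm_insert l n \<tau> x = x" if "x \<notin> {1..Suc n}" for x
    using that by (auto simp: perm_insert_def)
qed

lemma perm_insert_last: "perm_insert l n \<tau> (Suc n) = l" by (simp add: perm_insert_def)

lemma perm_insert_inj:
  assumes "\<tau> permutes {1..n}" "\<tau>' permutes {1..n}" "perm_insert l n \<tau> = perm_insert l n \<tau>'"
  shows "\<tau> = \<tau>'"
proof
  fix j show "\<tau> j = \<tau>' j"
  proof (cases "j \<in> {1..n}")
    case True
    then have "skip l (\<tau> j) = skip l (\<tau>' j)" using assms(3) by (metis perm_insert_def)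
    then show ?thesis by (simp add: skip_inj)
  next
    case False
    then show ?thesis using assms(1,2) by (simp add: permutes_not_in)
  qed
qed

lemma perm_insert_inverse:
  assumes "\<sigma> permutes {1..Suc n}"
  defines "\<tau> \<equiv> (\<lambda>j. if j \<in> {1..n} then unskip (\<sigma> (Suc n)) (\<sigma> j) else j)"
  shows "\<tau> permutes {1..n}" "\<sigma> = perm_insert (\<sigma> (Suc n)) n \<tau>" "\<sigma> (Suc n) \<in> {1..Suc n}"
proof -
  define l where "l = \<sigma> (Suc n)"
  have sin: "\<sigma> j \<in> {1..Suc n}" if "j \<in> {1..Suc n}" for j
    using permutes_in_image[OF assms(1)] that by blast
  have sne: "\<sigma> j \<noteq> l" if "j \<in> {1..n}" for j
  proof
    assume "\<sigma> j = l"
    then have "j = Suc n" using permutes_inj[OF assms(1)] by (auto simp: l_def inj_def)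
    then show False using that by simp
  qed
  show "\<sigma> (Suc n) \<in> {1..Suc n}" using sin by auto
  show "\<tau> permutes {1..n}"
  proof (rule inj_imp_permutes)
    show "inj_on \<tau> {1..n}"
    proof (rule inj_onI)
      fix i j assume i: "i \<in> {1..n}" and j: "j \<in> {1..n}" and e: "\<tau> i = \<tau> j"
      then have "skip l (\<tau> i) = skip l (\<tau> j)" by simp
      then have "\<sigma> i = \<sigma> j" using i j sne by (simp add: \<tau>_def l_def skip_unskip)
      then show "i = j" using permutes_inj[OF assms(1)] by (simp add: inj_def)
    qed
    show "finite {1..n}" by simp
    show "\<tau> x \<in> {1..n}" if x: "x \<in> {1..n}" for x
    proof -
      have "\<sigma> x \<in> {1..Suc n}" "\<sigma> x \<noteq> l" "l \<in> {1..Suc n}" using sin x sne[OF x] by (auto simp: l_def)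
      then show ?thesis using x by (auto simp: \<tau>_def unskip_def l_def)
    qed
    show "\<tau> x = x" if "x \<notin> {1..n}" for x using that unfolding \<tau>_def by presburger
  qed
  show "\<sigma> = perm_insert (\<sigma> (Suc n)) n \<tau>"
  proof
    fix j show "\<sigma> j = perm_insert (\<sigma> (Suc n)) n \<tau> j"
    proof (cases "j \<in> {1..n}")
      case True then show ?thesis using sne[OF True]
          by (simp add: perm_insert_def \<tau>_def skip_unskip l_def)
    next
      case False
      then have "j = Suc n \<or> j \<notin> {1..Suc n}" by auto
      then show ?thesis using False assms(1) by (auto simp: perm_insert_def permutes_not_in)
    qed
  qed
qed

lemma sum_perms_Suc:
  "(\<Sum>\<sigma>\<in>{\<sigma>. \<sigma> permutes {1..Suc n}}. F \<sigma>) = (\<Sum>l=1..Suc n. \<Sum>\<tau>\<in>{\<tau>. \<tau> permutes {1..n}}. F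
      (perm_insert l n \<tau>))"
proof -
  have eq: "{\<sigma>. \<sigma> permutes {1..Suc n}} = (\<Union>l\<in>{1..Suc n}. perm_insert l n ` {\<tau>. \<tau> permutes {1..n}})"
  proof (rule set_eqI, rule iffI)
    fix \<sigma> assume "\<sigma> \<in> {\<sigma>. \<sigma> permutes {1..Suc n}}"
    then have p: "\<sigma> permutes {1..Suc n}" by simp
    show "\<sigma> \<in> (\<Union>l\<in>{1..Suc n}. perm_insert l n ` {\<tau>. \<tau> permutes {1..n}})"
      using perm_insert_inverse[OF p] by blast
  next
    fix \<sigma> assume "\<sigma> \<in> (\<Union>l\<in>{1..Suc n}. perm_insert l n ` {\<tau>. \<tau> permutes {1..n}})"
    then show "\<sigma> \<in> {\<sigma>. \<sigma> permutes {1..Suc n}}" using perm_insert_permutes by auto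
  qed
  have "(\<Sum>\<sigma>\<in>{\<sigma>. \<sigma> permutes {1..Suc n}}. F \<sigma>)
      = (\<Sum>l=1..Suc n. \<Sum>\<sigma>\<in>perm_insert l n ` {\<tau>. \<tau> permutes {1..n}}. F \<sigma>)"
    unfolding eq
  proof (rule sum.UNION_disjoint)
    show "finite {1..Suc n}" by simp
    show "\<forall>i\<in>{1..Suc n}. finite (perm_insert i n ` {\<tau>. \<tau> permutes {1..n}})"
      by (simp add: finite_permutations)
    show "\<forall>i\<in>{1..Suc n}. \<forall>j\<in>{1..Suc n}. i \<noteq> j \<longrightarrow>
        perm_insert i n ` {\<tau>. \<tau> permutes {1..n}} \<inter> perm_insert j n ` {\<tau>. \<tau> permutes {1..n}} = {}"
      using perm_insert_last by (auto) (metis perm_insert_last)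
  qed
  also have "\<dots> = (\<Sum>l=1..Suc n. \<Sum>\<tau>\<in>{\<tau>. \<tau> permutes {1..n}}. F (perm_insert l n \<tau>))"
  proof (rule sum.cong[OF refl])
    fix l assume "l \<in> {1..Suc n}"
    have "inj_on (perm_insert l n) {\<tau>. \<tau> permutes {1..n}}"
      by (rule inj_onI) (use perm_insert_inj in auto)
    then show "(\<Sum>\<sigma>\<in>perm_insert l n ` {\<tau>. \<tau> permutes {1..n}}. F \<sigma>)
        = (\<Sum>\<tau>\<in>{\<tau>. \<tau> permutes {1..n}}. F (perm_insert l n \<tau>))"
      by (simp add: sum.reindex)
  qed
  finally show ?thesis .
qed




lemma Inv_perm_insert:
  assumes "\<tau> permutes {1..n}" "l \<in> {1..Suc n}"
  shows "Inv (Suc n) (perm_insert l n \<tau>) = Inv n \<tau> \<union> (\<lambda>j. (j, Suc n)) ` {j\<in>{1..n}. l \<le> \<tau> j}"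
proof (rule set_eqI, rule iffI)
  fix p assume p: "p \<in> Inv (Suc n) (perm_insert l n \<tau>)"
  obtain j k where jk: "p = (j,k)" by (cases p)
  show "p \<in> Inv n \<tau> \<union> (\<lambda>j. (j, Suc n)) ` {j\<in>{1..n}. l \<le> \<tau> j}"
  proof (cases "k = Suc n")
    case True
    then have "j \<in> {1..n}" "skip l (\<tau> j) > l" using p jk by (auto simp: Inv_def perm_insert_def)
    then show ?thesis using jk True by (auto simp: skip_def split: if_splits)
  next
    case False
    then have "j \<in> {1..n}" "k \<in> {1..n}" "j < k" "skip l (\<tau> j) > skip l (\<tau> k)"
      using p jk by (auto simp: Inv_def perm_insert_def)
    then show ?thesis using jk by (auto simp: Inv_def skip_less)
  qed
next
  fix p assume p: "p \<in> Inv n \<tau> \<union> (\<lambda>j. (j, Suc n)) ` {j\<in>{1..n}. l \<le> \<tau> j}"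
  then show "p \<in> Inv (Suc n) (perm_insert l n \<tau>)"
    by (auto simp: Inv_def perm_insert_def skip_less) (auto simp: skip_def)
qed

lemma finite_Inv: "finite (Inv n \<sigma>)"
  by (rule finite_subset[of _ "{1..n} \<times> {1..n}"]) (auto simp: Inv_def)

lemma prod_Inv_perm_insert:
  fixes F :: "nat \<Rightarrow> nat \<Rightarrow> 'a::comm_monoid_mult"
  assumes t: "\<tau> permutes {1..n}" and l: "l \<in> {1..Suc n}"
  shows "(\<Prod>(j,k)\<in>Inv (Suc n) (perm_insert l n \<tau>). F (perm_insert l n \<tau> k) (perm_insert l n \<tau> j))
     = (\<Prod>(j,k)\<in>Inv n \<tau>. F (skip l (\<tau> k)) (skip l (\<tau> j))) * (\<Prod>i\<in>{Suc l..Suc n}. F l i)"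
proof -
  let ?J = "{j\<in>{1..n}. l \<le> \<tau> j}"
  have disj: "Inv n \<tau> \<inter> (\<lambda>j. (j, Suc n)) ` ?J = {}" by (auto simp: Inv_def)
  have "(\<Prod>(j,k)\<in>Inv (Suc n) (perm_insert l n \<tau>). F (perm_insert l n \<tau> k) (perm_insert l n \<tau> j))
      = (\<Prod>(j,k)\<in>Inv n \<tau>. F (perm_insert l n \<tau> k) (perm_insert l n \<tau> j))
          * (\<Prod>(j,k)\<in>(\<lambda>j. (j, Suc n)) ` ?J. F (perm_insert l n \<tau> k) (perm_insert l n \<tau> j))"
    unfolding Inv_perm_insert[OF t l] by (rule prod.union_disjoint[OF finite_Inv _ disj]) simp
  also have "(\<Prod>(j,k)\<in>Inv n \<tau>. F (perm_insert l n \<tau> k) (perm_insert l n \<tau> j))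
      = (\<Prod>(j,k)\<in>Inv n \<tau>. F (skip l (\<tau> k)) (skip l (\<tau> j)))"
    by (rule prod.cong) (auto simp: Inv_def perm_insert_def)
  also have "(\<Prod>(j,k)\<in>(\<lambda>j. (j, Suc n)) ` ?J. F (perm_insert l n \<tau> k) (perm_insert l n \<tau> j))
      = (\<Prod>j\<in>?J. F l (skip l (\<tau> j)))"
    by (subst prod.reindex) (auto simp: inj_on_def perm_insert_def)
  also have "\<dots> = (\<Prod>i\<in>{Suc l..Suc n}. F l i)"
  proof (rule prod.reindex_bij_betw)
    show "bij_betw (\<lambda>j. skip l (\<tau> j)) ?J {Suc l..Suc n}"
    proof (rule bij_betw_imageI)
      show "inj_on (\<lambda>j. skip l (\<tau> j)) ?J"
        using permutes_inj[OF t] by (auto simp: inj_on_def skip_inj inj_def)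
      show "(\<lambda>j. skip l (\<tau> j)) ` ?J = {Suc l..Suc n}"
      proof (rule set_eqI, rule iffI)
        fix i assume "i \<in> (\<lambda>j. skip l (\<tau> j)) ` ?J"
        then obtain j where "j \<in> {1..n}" "l \<le> \<tau> j" "i = skip l (\<tau> j)" by auto
        moreover have "\<tau> j \<in> {1..n}" using permutes_in_image[OF t] \<open>j \<in> {1..n}\<close> by blast
        ultimately show "i \<in> {Suc l..Suc n}" by (auto simp: skip_def)
      next
        fix i assume i: "i \<in> {Suc l..Suc n}"
        then have "i - 1 \<in> {1..n}" using l by auto
        then obtain j where j: "j \<in> {1..n}" "\<tau> j = i - 1"
          using permutes_image[OF t] by (metis imageE)
        then have "skip l (\<tau> j) = i" "l \<le> \<tau> j" using i by (auto simp: skip_def)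
        then show "i \<in> (\<lambda>j. skip l (\<tau> j)) ` ?J" using j by force
      qed
    qed
  qed
  finally show ?thesis .
qed

section \<open>Symmetrized sums over permutations\<close>

text \<open>The common shape of G_x, Gbar_x, H_xbar and Hbar_xbar.\<close>
definition wavefunction :: "(complex \<Rightarrow> complex) \<Rightarrow> (complex \<Rightarrow> complex)
    \<Rightarrow> (complex \<Rightarrow> complex \<Rightarrow> complex) \<Rightarrow> (complex \<Rightarrow> complex \<Rightarrow> complex) \<Rightarrow> (complex \<Rightarrow> complex)
    \<Rightarrow> nat \<Rightarrow> nat \<Rightarrow> (nat \<Rightarrow> nat) \<Rightarrow> (nat \<Rightarrow> complex) \<Rightarrow> complex" where
  "wavefunction \<pi> \<rho> h s z M N x u =
    (\<Prod>j=1..N. \<pi> (u j) * \<rho> (u j)^M) * (\<Prod>j=1..N. \<Prod>k=j+1..N. h (u j) (u k))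
    * (\<Sum>\<sigma>\<in>{\<sigma>. \<sigma> permutes {1..N}}.
         (\<Prod>(j,k)\<in>Inv N \<sigma>. s (u (\<sigma> k)) (u (\<sigma> j))) * (\<Prod>j=1..N. z (u (\<sigma> j))^(x j)))"

lemma Inv_0: "Inv 0 \<sigma> = {}" by (auto simp: Inv_def)

lemma wavefunction_0: "wavefunction \<pi> \<rho> h s z M 0 x u = 1"
  by (simp add: wavefunction_def Inv_0)

lemma wavefunction_Suc_sites: "wavefunction \<pi> \<rho> h s z (Suc M) N x u
    = (\<Prod>j=1..N. \<rho> (u j)) * wavefunction \<pi> \<rho> h s z M N x u"
  by (simp add: wavefunction_def prod.distrib[symmetric] ac_simps)

lemma term_perm_insert:
  assumes t: "\<tau> permutes {1..n}" and l: "l \<in> {1..Suc n}"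
  shows "(\<Prod>(j,k)\<in>Inv (Suc n) (perm_insert l n \<tau>). s (u (perm_insert l n \<tau> k)) (u
      (perm_insert l n \<tau> j)))
      * (\<Prod>j=1..Suc n. z (u (perm_insert l n \<tau> j))^(x j))
    = z (u l)^(x (Suc n)) * (\<Prod>i\<in>{Suc l..Suc n}. s (u l) (u i))
      * ((\<Prod>(j,k)\<in>Inv n \<tau>. s ((u \<circ> skip l) (\<tau> k)) ((u \<circ> skip l) (\<tau> j)))
        * (\<Prod>j=1..n. z ((u \<circ> skip l) (\<tau> j))^(x j)))"
proof -
  have inversions: "(\<Prod>(j,k)\<in>Inv (Suc n) (perm_insert l n \<tau>). s (u (perm_insert l n \<tau> k)) (u
      (perm_insert l n \<tau> j)))
    = (\<Prod>(j,k)\<in>Inv n \<tau>. s ((u \<circ> skip l) (\<tau> k)) ((u \<circ> skip l) (\<tau> j)))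
        * (\<Prod>i\<in>{Suc l..Suc n}. s (u l) (u i))"
    using prod_Inv_perm_insert[OF t l, of "\<lambda>p q. s (u p) (u q)"] by simp
  have "(\<Prod>j=1..Suc n. z (u (perm_insert l n \<tau> j))^(x j))
      = (\<Prod>j=1..n. z (u (perm_insert l n \<tau> j))^(x j)) * z (u l)^(x (Suc n))"
    by (simp add: perm_insert_last)
  also have "(\<Prod>j=1..n. z (u (perm_insert l n \<tau> j))^(x j)) = (\<Prod>j=1..n. z ((u \<circ> skip l) (\<tau> j))^(x j))"
    by (rule prod.cong) (auto simp: perm_insert_def)
  finally show ?thesis unfolding inversions by (simp add: ac_simps)
qed

lemma wavefunction_expand_last:
  "wavefunction \<pi> \<rho> h s z M (Suc n) x u = (\<Sum>l=1..Suc n. \<pi> (u l) * \<rho> (u l)^M * z (u l)^(x (Suc n))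
     * (\<Prod>j\<in>{j\<in>{1..Suc n}. j < l}. h (u j) (u l)) * (\<Prod>k\<in>{Suc l..Suc n}. h (u l) (u k)
         * s (u l) (u k))
     * wavefunction \<pi> \<rho> h s z M n x (u \<circ> skip l))"
proof -
  define P1 where "P1 = (\<Prod>j=1..Suc n. \<pi> (u j) * \<rho> (u j)^M)"
  define P2 where "P2 = (\<Prod>j=1..Suc n. \<Prod>k=j+1..Suc n. h (u j) (u k))"
  define T where "T \<sigma> = (\<Prod>(j,k)\<in>Inv (Suc n) \<sigma>. s (u (\<sigma> k)) (u (\<sigma> j)))
      * (\<Prod>j=1..Suc n. z (u (\<sigma> j))^(x j))" for \<sigma>
  define v where "v l = u \<circ> skip l" for l
  define BS where "BS l = (\<Sum>\<tau>\<in>{\<tau>. \<tau> permutes {1..n}}. (\<Prod>(j,k)\<in>Inv n \<tau>. s (v l (\<tau> k)) (v l (\<tau> j)))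
      * (\<Prod>j=1..n. z (v l (\<tau> j))^(x j)))" for l
  have T: "(\<Sum>\<tau>\<in>{\<tau>. \<tau> permutes {1..n}}. T (perm_insert l n \<tau>))
      = z (u l)^(x (Suc n)) * (\<Prod>i\<in>{Suc l..Suc n}. s (u l) (u i)) * BS l"
    if l: "l \<in> {1..Suc n}" for l
  proof -
    have "T (perm_insert l n \<tau>) = z (u l)^(x (Suc n)) * (\<Prod>i\<in>{Suc l..Suc n}. s (u l) (u i)) *
       ((\<Prod>(j,k)\<in>Inv n \<tau>. s (v l (\<tau> k)) (v l (\<tau> j))) * (\<Prod>j=1..n. z (v l (\<tau> j))^(x j)))"
      if "\<tau> permutes {1..n}" for \<tau>
      unfolding T_def v_def by (rule term_perm_insert[OF that l])
    then show ?thesis unfolding BS_def by (simp add: sum_distrib_left)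
  qed
  have "wavefunction \<pi> \<rho> h s z M (Suc n) x u
      = P1 * P2 * (\<Sum>l=1..Suc n. \<Sum>\<tau>\<in>{\<tau>. \<tau> permutes {1..n}}. T (perm_insert l n \<tau>))"
    unfolding wavefunction_def P1_def P2_def T_def by (subst sum_perms_Suc) simp
  also have "\<dots> = (\<Sum>l=1..Suc n. P1 * P2 * (z (u l)^(x (Suc n)) * (\<Prod>i\<in>{Suc l..Suc n}. s (u l) (u i))
      * BS l))"
  proof (subst sum_distrib_left, rule sum.cong[OF refl])
    fix l assume l: "l \<in> {1..Suc n}"
    show "P1 * P2 * (\<Sum>\<tau>\<in>{\<tau>. \<tau> permutes {1..n}}. T (perm_insert l n \<tau>))
        = P1 * P2 * (z (u l)^(x (Suc n)) * (\<Prod>i\<in>{Suc l..Suc n}. s (u l) (u i)) * BS l)"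
      by (simp only: T[OF l])
  qed
  also have "\<dots> = (\<Sum>l=1..Suc n. \<pi> (u l) * \<rho> (u l)^M * z (u l)^(x (Suc n))
     * (\<Prod>j\<in>{j\<in>{1..Suc n}. j < l}. h (u j) (u l)) * (\<Prod>k\<in>{Suc l..Suc n}. h (u l) (u k)
         * s (u l) (u k))
     * wavefunction \<pi> \<rho> h s z M n x (u \<circ> skip l))"
  proof (rule sum.cong[OF refl])
    fix l assume l: "l \<in> {1..Suc n}"
    have p1: "P1 = \<pi> (u l) * \<rho> (u l)^M * (\<Prod>j=1..n. \<pi> (v l j) * \<rho> (v l j)^M)"
      unfolding P1_def using prod_skip[OF l, of "\<lambda>j. \<pi> (u j) * \<rho> (u j)^M"] by (simp add: v_def)
    have p2: "P2 = (\<Prod>j\<in>{j\<in>{1..Suc n}. j < l}. h (u j) (u l)) * (\<Prod>k\<in>{Suc l..Suc n}. h (u l) (u k))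
        * (\<Prod>j=1..n. \<Prod>k=j+1..n. h (v l j) (v l k))"
      unfolding P2_def using prod_nested_skip[OF l, of "\<lambda>j k. h (u j) (u k)"] by (simp add: v_def)
    have bf: "wavefunction \<pi> \<rho> h s z M n x (u \<circ> skip l)
        = (\<Prod>j=1..n. \<pi> (v l j) * \<rho> (v l j)^M) * (\<Prod>j=1..n. \<Prod>k=j+1..n. h (v l j) (v l k)) * BS l"
      unfolding wavefunction_def BS_def v_def by simp
    show "P1 * P2 * (z (u l)^(x (Suc n)) * (\<Prod>i\<in>{Suc l..Suc n}. s (u l) (u i)) * BS l) =
      \<pi> (u l) * \<rho> (u l)^M * z (u l)^(x (Suc n))
     * (\<Prod>j\<in>{j\<in>{1..Suc n}. j < l}. h (u j) (u l)) * (\<Prod>k\<in>{Suc l..Suc n}. h (u l) (u k)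
         * s (u l) (u k))
     * wavefunction \<pi> \<rho> h s z M n x (u \<circ> skip l)"
      unfolding p1 p2 bf prod.distrib by (simp add: ac_simps)
  qed
  finally show ?thesis .
qed


section \<open>Recursion over the sites\<close>

definition local_on :: "nat \<Rightarrow> vec \<Rightarrow> bool" where
  "local_on m \<phi> \<longleftrightarrow> (\<forall>S S'. S \<inter> {1..m} = S' \<inter> {1..m} \<longrightarrow> \<phi> S = \<phi> S')"

lemma local_onD: "local_on m \<phi> \<Longrightarrow> S \<inter> {1..m} = S' \<inter> {1..m} \<Longrightarrow> \<phi> S = \<phi> S'"
  unfolding local_on_def by blast

lemma local_onI: "(\<And>S S'. S \<inter> {1..m} = S' \<inter> {1..m} \<Longrightarrow> \<phi> S = \<phi> S') \<Longrightarrow> local_on m \<phi>"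
  unfolding local_on_def by blast

lemma local_on_smult: assumes "local_on m \<phi>" shows "local_on m (\<lambda>S. c * \<phi> S)"
proof (rule local_onI)
  fix S S' assume "S \<inter> {1..m} = S' \<inter> {1..m}"
  then have "\<phi> S = \<phi> S'" by (rule local_onD[OF assms])
  then show "c * \<phi> S = c * \<phi> S'" by simp
qed

lemma local_on_sum: assumes "(\<And>k. k \<in> K \<Longrightarrow> local_on m (\<phi> k))" shows "local_on m (\<lambda>S. \<Sum>k\<in>K. c k
    * \<phi> k S)"
proof (rule local_onI)
  fix S S' assume e: "S \<inter> {1..m} = S' \<inter> {1..m}"
  have "\<phi> k S = \<phi> k S'" if "k \<in> K" for k by (rule local_onD[OF assms[OF that] e])
  then show "(\<Sum>k\<in>K. c k * \<phi> k S) = (\<Sum>k\<in>K. c k * \<phi> k S')"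
    by (intro sum.cong) auto
qed

lemma sum_triangle_swap:
  fixes g :: "nat \<Rightarrow> nat \<Rightarrow> 'a::comm_monoid_add"
  shows "(\<Sum>k=1..N. \<Sum>l\<in>{1..<k}. g k l) = (\<Sum>l=1..N. \<Sum>k\<in>{Suc l..N}. g k l)"
proof (induction N)
  case 0 then show ?case by simp
next
  case (Suc N)
  have "(\<Sum>k=1..Suc N. \<Sum>l\<in>{1..<k}. g k l)
      = (\<Sum>k=1..N. \<Sum>l\<in>{1..<k}. g k l) + (\<Sum>l\<in>{1..<Suc N}. g (Suc N) l)"
    by simp
  also have "\<dots> = (\<Sum>l=1..N. \<Sum>k\<in>{Suc l..N}. g k l) + (\<Sum>l=1..N. g (Suc N) l)"
    using Suc by (simp add: atLeastLessThanSuc_atLeastAtMost)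
  also have "\<dots> = (\<Sum>l=1..N. \<Sum>k\<in>{Suc l..Suc N}. g k l)"
    by (simp add: sum.distrib[symmetric])
  also have "\<dots> = (\<Sum>l=1..Suc N. \<Sum>k\<in>{Suc l..Suc N}. g k l)"
    by simp
  finally show ?case .
qed

text \<open>The recursion T_{m+1}(w) = L_{m+1}(w) T_m(w) in abstract form. On m+1 sites the creation
  operator Yo splits according to whether site m+1 of the outgoing configuration is flipped (flp)
  relative to the reference state om; p0, p1 and q are the entries of the L-operator at site m+1,
  and pr0, pr1 read off a vector on m+1 sites with site m+1 in the reference resp. flipped state.
  tgt m N x is the basis configuration on m sites described by the positions x.\<close>
locale site_recursion =
  fixes Yo Xo :: "nat \<Rightarrow> complex \<Rightarrow> vec \<Rightarrow> vec" and om :: "nat \<Rightarrow> vec"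
    and fc gc :: "complex \<Rightarrow> complex \<Rightarrow> complex" and ev :: "nat \<Rightarrow> complex \<Rightarrow> complex"
    and compat :: "complex \<Rightarrow> complex \<Rightarrow> bool" and regular :: "complex \<Rightarrow> bool"
    and p0 p1 q :: "complex \<Rightarrow> complex"
    and flp :: "nat \<Rightarrow> nat set \<Rightarrow> bool"
    and pr0 pr1 :: "nat \<Rightarrow> vec \<Rightarrow> vec"
    and tgt :: "nat \<Rightarrow> nat \<Rightarrow> (nat \<Rightarrow> nat) \<Rightarrow> nat set"
    and pre z :: "complex \<Rightarrow> complex" and h s :: "complex \<Rightarrow> complex \<Rightarrow> complex"
  assumes exchange_algebra_sites: "exchange_algebra (Yo m) (Xo m) (om m) fc gc (ev m) compat"
    and local_Y: "local_on m (Yo m w \<phi>)" and local_X: "local_on m (Xo m w \<phi>)"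
    and local_om: "local_on m (om m)"
    and X_smult: "Xo m w (\<lambda>S. c * \<phi> S) = (\<lambda>S. c * Xo m w \<phi> S)"
    and Y_Suc: "Yo (Suc m) w \<phi> = (\<lambda>S. if flp m S
                    then p1 w * Yo m w (pr1 m \<phi>) S + q w * Xo m w (pr0 m \<phi>) S
                    else p0 w * Yo m w (pr0 m \<phi>) S)"
    and om_Suc: "om (Suc m) = (\<lambda>S. if flp m S then 0 else om m S)"
    and pr0_if: "local_on m G0 \<Longrightarrow> local_on m G1 \<Longrightarrow> pr0 m (\<lambda>S. if flp m S then G1 S else G0 S) = G0"
    and pr1_if: "local_on m G0 \<Longrightarrow> local_on m G1 \<Longrightarrow> pr1 m (\<lambda>S. if flp m S then G1 S else G0 S) = G1"
    and om_tgt: "om m (tgt m 0 x) = 1"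
    and flp_tgt: "strict_mono_on {1..Suc n} x \<Longrightarrow> x ` {1..Suc n} \<subseteq> {1..Suc m} \<Longrightarrow>
                    flp m (tgt (Suc m) (Suc n) x) = (x (Suc n) = Suc m)"
    and tgt_Suc_unoccupied: "x ` {1..N} \<subseteq> {1..m} \<Longrightarrow> tgt (Suc m) N x \<inter> {1..m} = tgt m N x \<inter> {1..m}"
    and tgt_Suc_occupied: "strict_mono_on {1..Suc n} x \<Longrightarrow> x ` {1..Suc n} \<subseteq> {1..Suc m} \<Longrightarrow> x (Suc n)
        = Suc m \<Longrightarrow>
                    tgt (Suc m) (Suc n) x \<inter> {1..m} = tgt m n x \<inter> {1..m}"
    and last_site_factor: "regular w \<Longrightarrow> pre w * p0 w ^ Suc m * z w ^ Suc m = q w * ev m w"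
    and fc_eq_h: "compat v w \<Longrightarrow> fc v w = h v w"
    and fc_eq_h_s: "compat v w \<Longrightarrow> fc v w = h w v * s w v"
    and weight_identity: "compat v w \<Longrightarrow> regular v \<Longrightarrow> regular w \<Longrightarrow>
      p1 v * q w + p0 w * q v * gc v w = q w * p0 v * fc v w"
begin

abbreviation site_chain where "site_chain m \<equiv> chain (Yo m) (om m)"

lemma Y_smult: "Yo m w (\<lambda>S. c * \<phi> S) = (\<lambda>S. c * Yo m w \<phi> S)"
  using exchange_algebra.Y_smult[OF exchange_algebra_sites] by blast

lemma Y_sum: "finite (K::nat set) \<Longrightarrow> Yo m w (\<lambda>S. \<Sum>k\<in>K. c k * \<phi> k S)
    = (\<lambda>S. \<Sum>k\<in>K. c k * Yo m w (\<phi> k) S)"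
  using exchange_algebra.Y_sum[OF exchange_algebra_sites] by blast

fun chain_from :: "nat \<Rightarrow> (nat \<Rightarrow> complex) \<Rightarrow> nat \<Rightarrow> nat \<Rightarrow> vec \<Rightarrow> vec" where
  "chain_from m u k 0 \<phi> = \<phi>"
| "chain_from m u k (Suc n) \<phi> = (if Suc n \<le> k then \<phi> else Yo m (u (Suc n)) (chain_from m u k n \<phi>))"

lemma chain_from_le: "n \<le> k \<Longrightarrow> chain_from m u k n \<phi> = \<phi>"
  by (induction n) auto

lemma local_site_chain: "local_on m (site_chain m u n)"
  by (cases n) (auto simp: local_Y local_om)

lemma local_chain_from: "local_on m \<phi> \<Longrightarrow> local_on m (chain_from m u k n \<phi>)"
  by (induction n) (auto simp: local_Y)

lemma chain_from_linear:
  assumes "finite (K::nat set)"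
  shows "chain_from m u k n (\<lambda>S. c0 * \<phi> S + (\<Sum>l\<in>K. c l * \<psi> l S))
    = (\<lambda>S. c0 * chain_from m u k n \<phi> S + (\<Sum>l\<in>K. c l * chain_from m u k n (\<psi> l) S))"
  by (induction n) (simp_all add: exchange_algebra.Y_smult_plus_sum[OF exchange_algebra_sites
      assms])

lemma chain_from_site_chain:
  assumes "1 \<le> k" "k \<le> n"
  shows "chain_from m u k n (site_chain m v (k-1))
      = site_chain m (\<lambda>i. if i < k then v i else u (Suc i)) (n-1)"
  using assms
proof (induction n)
  case 0 then show ?case by simp
next
  case (Suc n)
  show ?case
  proof (cases "Suc n = k")
    case True
    then show ?thesis by (simp add: chain_from_le del: chain_from.simps) (rule chain_cong, auto)
  next
    case False
    then have kn: "k \<le> n" using Suc.prems by simp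
    have "chain_from m u k (Suc n) (site_chain m v (k-1))
        = Yo m (u (Suc n)) (site_chain m (\<lambda>i. if i < k then v i else u (Suc i)) (n-1))"
      using False kn Suc by simp
    also have "\<dots> = site_chain m (\<lambda>i. if i < k then v i else u (Suc i)) (Suc n - 1)"
      using kn Suc.prems by (cases n) auto
    finally show ?thesis .
  qed
qed

text \<open>On m+1 sites with site m+1 flipped, exactly one factor Yo (u k) of the chain has used its
  q-entry and become Xo (u k) on m sites; the factors before it used p0 and those after it p1.\<close>
definition weight :: "(nat \<Rightarrow> complex) \<Rightarrow> nat \<Rightarrow> nat \<Rightarrow> complex" where
  "weight u n k = (\<Prod>i\<in>{1..<k}. p0 (u i)) * q (u k) * (\<Prod>i\<in>{Suc k..n}. p1 (u i))"

definition part_off :: "nat \<Rightarrow> (nat \<Rightarrow> complex) \<Rightarrow> nat \<Rightarrow> vec" where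
  "part_off m u n = (\<lambda>S. (\<Prod>i=1..n. p0 (u i)) * site_chain m u n S)"

definition part_on :: "nat \<Rightarrow> (nat \<Rightarrow> complex) \<Rightarrow> nat \<Rightarrow> vec" where
  "part_on m u n = (\<lambda>S. \<Sum>k=1..n. weight u n k
      * chain_from m u k n (Xo m (u k) (site_chain m u (k-1))) S)"

lemma local_part_off: "local_on m (part_off m u n)"
  unfolding part_off_def by (rule local_on_smult[OF local_site_chain])

lemma local_part_on: "local_on m (part_on m u n)"
  unfolding part_on_def by (rule local_on_sum) (rule local_chain_from[OF local_X])

lemma chain_split: "site_chain (Suc m) u n
    = (\<lambda>S. if flp m S then part_on m u n S else part_off m u n S)"
proof (induction n)
  case 0
  show ?case unfolding part_off_def part_on_def by (simp add: om_Suc cong: if_cong)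
next
  case (Suc n)
  define w where "w = u (Suc n)"
  have pr0: "pr0 m (site_chain (Suc m) u n)
      = part_off m u n" unfolding Suc by (rule pr0_if[OF local_part_off local_part_on])
  have pr1: "pr1 m (site_chain (Suc m) u n)
      = part_on m u n" unfolding Suc by (rule pr1_if[OF local_part_off local_part_on])
  have a1: "Yo m w (part_off m u n) = (\<lambda>S. (\<Prod>i=1..n. p0 (u i)) * site_chain m u (Suc n) S)"
    unfolding part_off_def by (simp add: Y_smult w_def)
  have a2: "Xo m w (part_off m u n) = (\<lambda>S. (\<Prod>i=1..n. p0 (u i))
      * chain_from m u (Suc n) (Suc n) (Xo m (u (Suc n)) (site_chain m u (Suc n - 1))) S)"
    unfolding part_off_def by (simp add: X_smult w_def del: chain_from.simps add: chain_from_le)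
  have a3: "Yo m w (part_on m u n) = (\<lambda>S. \<Sum>k=1..n. weight u n k
      * chain_from m u k (Suc n) (Xo m (u k) (site_chain m u (k-1))) S)"
    unfolding part_on_def by (subst Y_sum) (auto simp: w_def)
  have al1: "weight u (Suc n) k = weight u n k * p1 w" if "k \<in> {1..n}" for k
  proof -
    have "{Suc k..Suc n} = insert (Suc n) {Suc k..n}" using that by auto
    then show ?thesis using that by (simp add: weight_def w_def ac_simps)
  qed
  have al2: "weight u (Suc n) (Suc n) = (\<Prod>i=1..n. p0 (u i)) * q w"
    by (simp add: weight_def w_def atLeastLessThanSuc_atLeastAtMost)
  show ?case
  proof (rule ext)
    fix S
    show "site_chain (Suc m) u (Suc n) S
        = (if flp m S then part_on m u (Suc n) S else part_off m u (Suc n) S)"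
    proof (cases "flp m S")
      case True
      have "site_chain (Suc m) u (Suc n) S
          = p1 w * Yo m w (part_on m u n) S + q w * Xo m w (part_off m u n) S"
        using True by (simp add: Y_Suc pr0 pr1 w_def)
      also have "\<dots> = (\<Sum>k=1..n. weight u (Suc n) k
          * chain_from m u k (Suc n) (Xo m (u k) (site_chain m u (k-1))) S)
            + weight u (Suc n) (Suc n) * chain_from m u (Suc n) (Suc n) (Xo m (u (Suc n))
                (site_chain m u (Suc n - 1))) S"
        unfolding a2 a3 al2 by (simp add: sum_distrib_left al1 ac_simps)
      also have "\<dots> = part_on m u (Suc n) S" by (simp add: part_on_def del: chain_from.simps)
      finally show ?thesis using True by simp
    next
      case False
      have "site_chain (Suc m) u (Suc n) S = p0 w * Yo m w (part_off m u n) S"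
        using False by (simp add: Y_Suc pr0 pr1 w_def)
      also have "\<dots> = part_off m u (Suc n) S" unfolding a1 by (simp add: part_off_def w_def ac_simps)
      finally show ?thesis using False by simp
    qed
  qed
qed


definition generic :: "nat \<Rightarrow> (nat \<Rightarrow> complex) \<Rightarrow> bool" where
  "generic N u \<longleftrightarrow> (\<forall>i\<in>{1..N}. \<forall>j\<in>{1..N}. i \<noteq> j \<longrightarrow> compat (u i) (u j)) \<and> (\<forall>i\<in>{1..N}. regular (u i))"

lemma generic_mono: "generic N u \<Longrightarrow> n \<le> N \<Longrightarrow> generic n u"
  unfolding generic_def by auto

lemma generic_skip: assumes "generic (Suc n) u" "l \<in> {1..Suc n}" shows "generic n (u \<circ> skip l)"
proof -
  have "skip l i \<in> {1..Suc n}" if "i \<in> {1..n}" for i using that by (auto simp: skip_def)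
  then show ?thesis using assms unfolding generic_def by (auto simp: skip_inj)
qed

definition coeff :: "(nat \<Rightarrow> complex) \<Rightarrow> nat \<Rightarrow> nat \<Rightarrow> complex" where
  "coeff u N l = weight u N l * (\<Prod>i\<in>{1..<l}. fc (u i) (u l))
     + (\<Sum>k\<in>{Suc l..N}. weight u N k * gc (u k) (u l) * (\<Prod>i\<in>{1..<k}-{l}. fc (u i) (u l)))"

lemma weight_Suc: "k \<le> N \<Longrightarrow> weight u (Suc N) k = weight u N k * p1 (u (Suc N))"
proof -
  assume k: "k \<le> N"
  then have "{Suc k..Suc N} = insert (Suc N) {Suc k..N}" by auto
  then show ?thesis using k by (simp add: weight_def ac_simps)
qed

lemma weight_last: "weight u (Suc N) (Suc N) = (\<Prod>i=1..N. p0 (u i)) * q (u (Suc N))"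
  by (simp add: weight_def atLeastLessThanSuc_atLeastAtMost)

lemma coeff_eq_aux: "generic (l+d) u \<Longrightarrow> 1 \<le> l \<Longrightarrow> coeff u (l+d) l
    = q (u l) * (\<Prod>i\<in>{1..l+d}-{l}. p0 (u i) * fc (u i) (u l))"
proof (induction d)
  case 0
  have e: "{1..l}-{l} = {1..<l}" by auto
  show ?case unfolding coeff_def weight_def add_0_right e by (simp add: prod.distrib ac_simps)
next
  case (Suc d)
  define N where "N = l + d"
  define v where "v = u (Suc N)"
  define w where "w = u l"
  have g: "generic N u" using Suc.prems generic_mono N_def by auto
  have IH: "coeff u N l = q w * (\<Prod>i\<in>{1..N}-{l}. p0 (u i) * fc (u i) w)"
    using Suc.IH g Suc.prems by (simp add: N_def w_def)
  have okvw: "compat v w" "regular v" "regular w"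
    using Suc.prems unfolding generic_def v_def w_def N_def by auto
  have s1: "{Suc l..Suc N} = insert (Suc N) {Suc l..N}" by (auto simp: N_def)
  have s2: "{1..<Suc N}-{l} = {1..N}-{l}" by auto
  have s3: "{1..Suc N}-{l} = insert (Suc N) ({1..N}-{l})" using Suc.prems by (auto simp: N_def)
  have s4: "(\<Prod>i=1..N. p0 (u i)) = p0 w * (\<Prod>i\<in>{1..N}-{l}. p0 (u i))"
  proof -
    have "{1..N} = insert l ({1..N}-{l})" using Suc.prems by (auto simp: N_def)
    moreover have "l \<notin> {1..N}-{l}" by simp
    ultimately show ?thesis unfolding w_def by (metis finite_Diff finite_atLeastAtMost prod.insert)
  qed
  define P where "P = (\<Prod>i\<in>{1..<l}. fc (u i) w)"
  define A where "A = (\<Prod>i\<in>{1..N}-{l}. p0 (u i))"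
  define B where "B = (\<Prod>i\<in>{1..N}-{l}. fc (u i) w)"
  define Sm where "Sm = (\<Sum>k\<in>{Suc l..N}. weight u N k * gc (u k) w * (\<Prod>i\<in>{1..<k}-{l}. fc (u i) w))"
  have a: "weight u (Suc N) k = weight u N k
      * p1 v" if "k \<le> N" for k using weight_Suc[OF that] by (simp add: v_def)
  have sum1: "(\<Sum>k\<in>{Suc l..Suc N}. weight u (Suc N) k * gc (u k) w * (\<Prod>i\<in>{1..<k}-{l}. fc (u i) w))
        = (\<Sum>k\<in>{Suc l..N}. weight u (Suc N) k * gc (u k) w * (\<Prod>i\<in>{1..<k}-{l}. fc (u i) w))
          + weight u (Suc N) (Suc N) * gc v w * B"
    unfolding s1 B_def by (simp add: v_def atLeastLessThanSuc_atLeastAtMost)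
  have sum2: "(\<Sum>k\<in>{Suc l..N}. weight u (Suc N) k * gc (u k) w * (\<Prod>i\<in>{1..<k}-{l}. fc (u i) w))
      = p1 v * Sm"
    unfolding Sm_def sum_distrib_left by (rule sum.cong) (auto simp: a)
  have cN: "coeff u N l = weight u N l * P + Sm" unfolding coeff_def P_def Sm_def w_def ..
  have cSN: "coeff u (Suc N) l = weight u N l * p1 v * P + p1 v * Sm + p0 w * A * q v * gc v w * B"
  proof -
    have "coeff u (Suc N) l = weight u (Suc N) l * P + (p1 v * Sm
        + weight u (Suc N) (Suc N) * gc v w * B)"
      unfolding coeff_def P_def w_def[symmetric] sum1 sum2 ..
    also have "weight u (Suc N) l = weight u N l * p1 v" using a[of l] by (simp add: N_def)
    also have "weight u (Suc N) (Suc N) = p0 w * A * q v" unfolding weight_last s4 A_def v_def ..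
    finally show ?thesis by (simp add: algebra_simps)
  qed
  have IH': "weight u N l * P + Sm = q w * (A * B)" using IH unfolding cN A_def B_def prod.distrib .
  have "coeff u (Suc N) l = p1 v * (weight u N l * P + Sm) + p0 w * A * q v * gc v w * B"
    unfolding cSN by (simp add: algebra_simps)
  also have "\<dots> = (A * B) * (p1 v * q w + p0 w * q v
      * gc v w)" unfolding IH' by (simp add: algebra_simps)
  also have "\<dots> = (A * B) * (q w * p0 v * fc v w)" unfolding weight_identity[OF okvw] ..
  also have "\<dots> = q w * (\<Prod>i\<in>{1..Suc N}-{l}. p0 (u i) * fc (u i) w)"
    unfolding s3 A_def B_def by (simp add: prod.distrib v_def ac_simps)
  finally show ?case by (simp add: N_def w_def)
qed

lemma coeff_eq: "generic N u \<Longrightarrow> l \<in> {1..N} \<Longrightarrow> coeff u N l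
    = q (u l) * (\<Prod>i\<in>{1..N}-{l}. p0 (u i) * fc (u i) (u l))"
  using coeff_eq_aux[of l "N - l" u] by auto


lemma skip_fun: "(\<lambda>i. if i < k then u i else u (Suc i)) = u \<circ> skip k"
  by (auto simp: skip_def)

lemma strict_mono_restr: "strict_mono_on {1..Suc n} x \<Longrightarrow> strict_mono_on {1..n} x"
  by (auto simp: strict_mono_on_def)

lemma strict_mono_le: "strict_mono_on {1..Suc n} x \<Longrightarrow> j \<in> {1..n} \<Longrightarrow> x j < x (Suc n)"
  by (auto simp: strict_mono_on_def)

lemma chain_from_X_on_chain:
  assumes g: "generic (Suc n) u" and k: "k \<in> {1..Suc n}"
  shows "chain_from m u k (Suc n) (Xo m (u k) (site_chain m u (k-1)))
    = (\<lambda>S. ev m (u k) * (\<Prod>i\<in>{1..<k}. fc (u i) (u k)) * site_chain m (u \<circ> skip k) n S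
     + (\<Sum>l\<in>{1..<k}. gc (u k) (u l) * ev m (u l) * (\<Prod>i\<in>{1..<k}-{l}. fc (u i) (u l))
         * site_chain m (u \<circ> skip l) n S))"
proof -
  have k1: "1 \<le> k" "k \<le> Suc n" using k by auto
  have "\<forall>i\<in>{1..k-1}. \<forall>j\<in>{1..k-1}. i \<noteq> j \<longrightarrow> compat (u i) (u j)" "\<forall>i\<in>{1..k-1}. compat (u i) (u k)"
    using g k1 unfolding generic_def by auto
  moreover have "{1..k-1} = {1..<k}" using k1 by auto
  ultimately have X_expansion: "Xo m (u k) (site_chain m u (k-1))
    = (\<lambda>S. (ev m (u k) * (\<Prod>i\<in>{1..<k}. fc (u i) (u k))) * site_chain m u (k-1) S
     + (\<Sum>l\<in>{1..<k}. (gc (u k) (u l) * ev m (u l) * (\<Prod>i\<in>{1..<k}-{l}. fc (u i) (u l)))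
          * Yo m (u k) (site_chain m (u \<circ> skip l) (k-1-1)) S))"
    using exchange_algebra.X_on_chain[OF exchange_algebra_sites] by simp
  have diagonal: "chain_from m u k (Suc n) (site_chain m u (k-1)) = site_chain m (u \<circ> skip k) n"
    using chain_from_site_chain[OF k1] by (simp add: skip_fun)
  have unwanted: "chain_from m u k (Suc n) (Yo m (u k) (site_chain m (u \<circ> skip l) (k-1-1)))
      = site_chain m (u \<circ> skip l) n" if l: "l \<in> {1..<k}" for l
  proof -
    have "Yo m (u k) (site_chain m (u \<circ> skip l) (k-1-1)) = site_chain m (u \<circ> skip l) (k-1)"
      using chain_skip_Suc[of l "k-1" "Yo m" u "om m"] l by auto
    moreover have "(\<lambda>i. if i < k then (u \<circ> skip l) i else u (Suc i)) = u \<circ> skip l"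
      using l by (auto simp: skip_def)
    ultimately show ?thesis using chain_from_site_chain[OF k1, where v="u \<circ> skip l"] by simp
  qed
  show ?thesis
    unfolding X_expansion chain_from_linear[OF finite_atLeastLessThan] diagonal
    by (intro ext arg_cong2[where f="(+)"] sum.cong refl) (simp only: unwanted)
qed

lemma site_chain_Suc_unoccupied:
  assumes "x ` {1..N} \<subseteq> {1..m}" and "\<not> flp m (tgt (Suc m) N x)"
  shows "site_chain (Suc m) u N (tgt (Suc m) N x)
      = (\<Prod>i=1..N. p0 (u i)) * site_chain m u N (tgt m N x)"
proof -
  have "site_chain (Suc m) u N (tgt (Suc m) N x)
      = (\<Prod>i=1..N. p0 (u i)) * site_chain m u N (tgt (Suc m) N x)"
    using assms(2) by (simp add: chain_split part_off_def)
  also have "site_chain m u N (tgt (Suc m) N x) = site_chain m u N (tgt m N x)"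
    by (rule local_onD[OF local_site_chain tgt_Suc_unoccupied[OF assms(1)]])
  finally show ?thesis .
qed

text \<open>If site m+1 carries the last particle, the creation operator used there is replaced by
  its diagonal partner, which is then moved to the reference state through the earlier ones.\<close>
lemma site_chain_Suc_occupied:
  assumes sm: "strict_mono_on {1..Suc n} x" and im: "x ` {1..Suc n} \<subseteq> {1..Suc m}"
    and last: "x (Suc n) = Suc m" and g: "generic (Suc n) u"
  shows "site_chain (Suc m) u (Suc n) (tgt (Suc m) (Suc n) x)
    = (\<Sum>l=1..Suc n. site_chain m (u \<circ> skip l) n (tgt m n x) * ev m (u l) * coeff u (Suc n) l)"
proof -
  define T where "T = tgt (Suc m) (Suc n) x"
  define R where "R l = site_chain m (u \<circ> skip l) n (tgt m n x)" for l
  have R: "site_chain m (u \<circ> skip l) n T = R l" for l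
    unfolding R_def T_def by (rule local_onD[OF local_site_chain tgt_Suc_occupied[OF sm im last]])
  have "flp m T" using flp_tgt[OF sm im] last by (simp add: T_def)
  then have "site_chain (Suc m) u (Suc n) T = part_on m u (Suc n) T"
    by (subst chain_split) simp
  also have "\<dots> = (\<Sum>k=1..Suc n. weight u (Suc n) k
      * chain_from m u k (Suc n) (Xo m (u k) (site_chain m u (k-1))) T)"
    unfolding part_on_def ..
  also have "\<dots> = (\<Sum>k=1..Suc n. weight u (Suc n) k * (ev m (u k) * (\<Prod>i\<in>{1..<k}. fc (u i) (u k)) * R k
           + (\<Sum>l\<in>{1..<k}. gc (u k) (u l) * ev m (u l) * (\<Prod>i\<in>{1..<k}-{l}. fc (u i) (u l)) * R l)))"
    by (rule sum.cong[OF refl]) (simp only: chain_from_X_on_chain[OF g] R)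
  also have "\<dots> = (\<Sum>k=1..Suc n. weight u (Suc n) k * ev m (u k) * (\<Prod>i\<in>{1..<k}. fc (u i) (u k)) * R k)
      + (\<Sum>k=1..Suc n. \<Sum>l\<in>{1..<k}. weight u (Suc n) k * gc (u k) (u l) * ev m (u l)
          * (\<Prod>i\<in>{1..<k}-{l}. fc (u i) (u l)) * R l)"
    by (simp add: sum.distrib distrib_left sum_distrib_left ac_simps)
  also have "\<dots> = (\<Sum>l=1..Suc n. R l * ev m (u l) * coeff u (Suc n) l)"
    unfolding sum_triangle_swap sum.distrib[symmetric] coeff_def
    by (rule sum.cong[OF refl]) (simp add: distrib_left distrib_right sum_distrib_left
        sum_distrib_right ac_simps)
  finally show ?thesis by (simp add: T_def R_def)
qed

lemma wavefunction_Suc_occupied: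
  assumes g: "generic (Suc n) u" and last: "x (Suc n) = Suc m"
  shows "wavefunction pre p0 h s z (Suc m) (Suc n) x u
    = (\<Sum>l=1..Suc n. wavefunction pre p0 h s z m n x (u \<circ> skip l) * ev m (u l) * coeff u (Suc n) l)"
  unfolding wavefunction_expand_last
proof (rule sum.cong[OF refl])
  fix l assume l: "l \<in> {1..Suc n}"
  have reg: "regular (u l)" using g l unfolding generic_def by auto
  have compat: "compat (u i) (u l)" if "i \<in> {1..Suc n}" "i \<noteq> l" for i
    using g l that unfolding generic_def by auto
  have below: "(\<Prod>j\<in>{j\<in>{1..Suc n}. j < l}. h (u j) (u l)) = (\<Prod>j\<in>{1..<l}. fc (u j) (u l))"
  proof -
    have "{j\<in>{1..Suc n}. j < l} = {1..<l}" using l by auto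
    then show ?thesis using compat l by (auto intro!: prod.cong simp: fc_eq_h)
  qed
  have above: "(\<Prod>k\<in>{Suc l..Suc n}. h (u l) (u k) * s (u l) (u k))
      = (\<Prod>k\<in>{Suc l..Suc n}. fc (u k) (u l))"
    using compat by (auto intro!: prod.cong simp: fc_eq_h_s)
  have others: "(\<Prod>i\<in>{1..Suc n}-{l}. F i) = (\<Prod>i\<in>{1..<l}. F i) * (\<Prod>i\<in>{Suc l..Suc n}. F i)"
    for F :: "nat \<Rightarrow> complex"
  proof -
    have "{1..Suc n}-{l} = {1..<l} \<union> {Suc l..Suc n}" using l by auto
    moreover have "(\<Prod>i\<in>{1..<l} \<union> {Suc l..Suc n}. F i)
        = (\<Prod>i\<in>{1..<l}. F i) * (\<Prod>i\<in>{Suc l..Suc n}. F i)"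
      by (rule prod.union_disjoint) auto
    ultimately show ?thesis by simp
  qed
  have lower: "wavefunction pre p0 h s z (Suc m) n x (u \<circ> skip l)
      = (\<Prod>i\<in>{1..Suc n}-{l}. p0 (u i)) * wavefunction pre p0 h s z m n x (u \<circ> skip l)"
  proof -
    have "(\<Prod>j=1..n. p0 ((u \<circ> skip l) j)) = (\<Prod>i\<in>skip l ` {1..n}. p0 (u i))"
      by (subst prod.reindex) (auto simp: inj_on_def skip_inj)
    then show ?thesis using skip_image[OF l] by (simp add: wavefunction_Suc_sites)
  qed
  show "pre (u l) * p0 (u l)^Suc m * z (u l)^x (Suc n)
      * (\<Prod>j\<in>{j\<in>{1..Suc n}. j < l}. h (u j) (u l)) * (\<Prod>k\<in>{Suc l..Suc n}. h (u l) (u k)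
          * s (u l) (u k))
      * wavefunction pre p0 h s z (Suc m) n x (u \<circ> skip l)
    = wavefunction pre p0 h s z m n x (u \<circ> skip l) * ev m (u l) * coeff u (Suc n) l"
    unfolding below above lower coeff_eq[OF g l] last last_site_factor[OF reg]
    unfolding prod.distrib others by (simp add: ac_simps)
qed

theorem site_chain_eq_wavefunction:
  "strict_mono_on {1..N} x \<Longrightarrow> x ` {1..N} \<subseteq> {1..M} \<Longrightarrow> generic N u \<Longrightarrow>
   site_chain M u N (tgt M N x) = wavefunction pre p0 h s z M N x u"
proof (induction M arbitrary: N x u)
  case 0
  then have "N = 0" by (cases N) auto
  then show ?case by (simp add: om_tgt wavefunction_0)
next
  case (Suc m)
  show ?case
  proof (cases N)
    case 0
    then show ?thesis by (simp add: om_tgt wavefunction_0)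
  next
    case (Suc n)
    have sm: "strict_mono_on {1..Suc n} x" and im: "x ` {1..Suc n} \<subseteq> {1..Suc m}"
      and g: "generic (Suc n) u"
      using Suc.prems Suc by auto
    show ?thesis
    proof (cases "x (Suc n) = Suc m")
      case True
      have "x ` {1..n} \<subseteq> {1..m}" using strict_mono_le[OF sm] im True by fastforce
      then have IH: "site_chain m (u \<circ> skip l) n (tgt m n x)
          = wavefunction pre p0 h s z m n x (u \<circ> skip l)"
        if "l \<in> {1..Suc n}" for l
        using Suc.IH strict_mono_restr[OF sm] generic_skip[OF g that] by blast
      have "(\<Sum>l=1..Suc n. site_chain m (u \<circ> skip l) n (tgt m n x) * ev m (u l) * coeff u (Suc n) l)
          = (\<Sum>l=1..Suc n. wavefunction pre p0 h s z m n x (u \<circ> skip l) * ev m (u l)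
              * coeff u (Suc n) l)"
        by (rule sum.cong) (simp_all add: IH)
      then show ?thesis
        unfolding \<open>N = Suc n\<close> site_chain_Suc_occupied[OF sm im True g]
          wavefunction_Suc_occupied[of n u x m, OF g True] .
    next
      case False
      have im': "x ` {1..N} \<subseteq> {1..m}"
      proof
        fix y assume "y \<in> x ` {1..N}"
        then obtain j where j: "j \<in> {1..Suc n}" "y = x j" using \<open>N = Suc n\<close> by auto
        have "x j \<le> x (Suc n)"
          using strict_mono_le[OF sm, of j] j by (cases "j = Suc n") auto
        moreover have "x j \<in> {1..Suc m}" "x (Suc n) \<in> {1..Suc m}"
          using im j(1) by (auto simp: image_subset_iff)
        ultimately show "y \<in> {1..m}" using False j by auto
      qed
      have "\<not> flp m (tgt (Suc m) N x)" using flp_tgt[OF sm im] False \<open>N = Suc n\<close> by simp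
      then show ?thesis
        using site_chain_Suc_unoccupied[OF im'] Suc.IH[OF Suc.prems(1) im' Suc.prems(3)]
        by (simp add: wavefunction_Suc_sites)
    qed
  qed
qed

end

section \<open>The six-vertex model\<close>

text \<open>The six-vertex R-matrix, entries R(u,v)^{g1 g2}_{b1 b2}. It intertwines two copies of the
  L-operator exactly when cd + af = 0 and tcd + be = 0.\<close>
definition Rmat :: "complex \<Rightarrow> complex \<Rightarrow> complex \<Rightarrow> bool \<Rightarrow> bool \<Rightarrow> bool \<Rightarrow> bool \<Rightarrow> complex" where
"Rmat t u v g1 g2 b1 b2 = (if g1=b1 \<and> g2=b2 then (if g1 = g2 then u - t*v else if g1
    = False then t*(u-v) else u - v)
   else if g1 \<noteq> g2 \<and> b1 = g2 \<and> b2 = g1 then (if g1 = False then (1-t)*u else (1-t)*v) else 0)"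

definition bool_sum :: "(bool \<Rightarrow> complex) \<Rightarrow> complex" where "bool_sum h = h False + h True"

lemma RLL_relation:
  assumes rel1: "c*d + a*f = 0" and rel2: "t*c*d + b*e = 0"
  shows "bool_sum (\<lambda>i1. bool_sum (\<lambda>i2. Rmat t u v g1 g2 i1 i2
      * bool_sum (\<lambda>r. Lent t a b c d e f u i1 s' a1 r * Lent t a b c d e f v i2 r a2 s)))
       = bool_sum (\<lambda>o1. bool_sum (\<lambda>o2. bool_sum (\<lambda>r. Lent t a b c d e f v g2 s' o2 r
           * Lent t a b c d e f u g1 r o1 s) * Rmat t u v o1 o2 a1 a2))"
  using rel1 rel2
  by (cases g1; cases g2; cases s'; cases a1; cases a2; cases s; simp add: bool_sum_def Lent_def
      Rmat_def; (simp add: algebra_simps)?; (algebra)?)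

lemma mono_cong_sites:
  "(\<forall>i\<in>{1..m}. (i \<in> S1 \<longleftrightarrow> i \<in> S2) \<and> (i \<in> T1 \<longleftrightarrow> i \<in> T2)) \<Longrightarrow> mono t a b c d e f m u g \<alpha> S1 T1
      = mono t a b c d e f m u g \<alpha> S2 T2"
proof (induction m arbitrary: g)
  case 0 then show ?case by simp
next
  case (Suc m)
  have "mono t a b c d e f m u \<beta> \<alpha> S1 T1 = mono t a b c d e f m u \<beta> \<alpha> S2 T2" for \<beta>
    using Suc by auto
  moreover have "(Suc m \<in> S1 \<longleftrightarrow> Suc m \<in> S2) \<and> (Suc m \<in> T1 \<longleftrightarrow> Suc m \<in> T2)" using Suc.prems by auto
  ultimately show ?case by simp
qed

lemma mono_insert_out: "mono t a b c d e f m u g \<alpha> (insert (Suc m) S) T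
    = mono t a b c d e f m u g \<alpha> S T"
  by (rule mono_cong_sites) auto

lemma mono_insert_in: "mono t a b c d e f m u g \<alpha> S (insert (Suc m) T)
    = mono t a b c d e f m u g \<alpha> S T"
  by (rule mono_cong_sites) auto

lemma mono_Suc_bool_sum: "mono t a b c d e f (Suc m) u g \<alpha> S' S =
   bool_sum (\<lambda>\<beta>. Lent t a b c d e f u g (Suc m \<in> S') \<beta> (Suc m \<in> S)
       * mono t a b c d e f m u \<beta> \<alpha> S' S)"
  by (simp add: bool_sum_def)

lemma sum_Pow_Suc:
  "(\<Sum>R\<in>Pow {1..Suc m}. F R) = (\<Sum>R\<in>Pow {1..m}. F R) + (\<Sum>R\<in>Pow {1..m}. F (insert (Suc m) R))"
proof -
  have e: "{1..Suc m} = insert (Suc m) {1..m}" by auto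
  have d: "Pow {1..m} \<inter> insert (Suc m) ` Pow {1..m} = {}" by auto
  have i: "inj_on (insert (Suc m)) (Pow {1..m})"
    by (rule inj_onI) (metis Pow_iff atLeastAtMost_iff insert_ident lessI not_less subset_eq)
  have "sum F (Pow {1..m} \<union> insert (Suc m) ` Pow {1..m})
      = sum F (Pow {1..m}) + sum F (insert (Suc m) ` Pow {1..m})"
    by (rule sum.union_disjoint[OF _ _ d]) auto
  moreover have "sum F (insert (Suc m) ` Pow {1..m}) = (\<Sum>R\<in>Pow {1..m}. F (insert (Suc m) R))"
    by (rule sum.reindex_cong[OF i refl refl])
  ultimately show ?thesis unfolding e Pow_insert by simp
qed

definition mono_pair where "mono_pair t a b c d e f m u v g1 a1 g2 a2 S' S =
   (\<Sum>R\<in>Pow {1..m}. mono t a b c d e f m u g1 a1 S' R * mono t a b c d e f m v g2 a2 R S)"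

lemma mono_pair_Suc: "mono_pair t a b c d e f (Suc m) u v g1 a1 g2 a2 S' S =
   bool_sum (\<lambda>\<beta>1. bool_sum (\<lambda>\<beta>2. bool_sum (\<lambda>r. Lent t a b c d e f u g1 (Suc m \<in> S') \<beta>1 r
       * Lent t a b c d e f v g2 r \<beta>2 (Suc m \<in> S)
        * mono_pair t a b c d e f m u v \<beta>1 a1 \<beta>2 a2 S' S)))"
proof -
  let ?L = "Lent t a b c d e f" and ?m = "mono t a b c d e f"
  have A: "?m (Suc m) u g1 a1 S' R * ?m (Suc m) v g2 a2 R S
     = bool_sum (\<lambda>\<beta>1. bool_sum (\<lambda>\<beta>2. ?L u g1 (Suc m \<in> S') \<beta>1 False * ?L v g2 False \<beta>2 (Suc m \<in> S)
         * (?m m u \<beta>1 a1 S' R * ?m m v \<beta>2 a2 R S)))"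
    if "R \<in> Pow {1..m}" for R
  proof -
    have "Suc m \<notin> R" using that by auto
    then show ?thesis unfolding mono_Suc_bool_sum by (simp add: bool_sum_def algebra_simps)
  qed
  have B: "?m (Suc m) u g1 a1 S' (insert (Suc m) R) * ?m (Suc m) v g2 a2 (insert (Suc m) R) S
     = bool_sum (\<lambda>\<beta>1. bool_sum (\<lambda>\<beta>2. ?L u g1 (Suc m \<in> S') \<beta>1 True * ?L v g2 True \<beta>2 (Suc m \<in> S)
         * (?m m u \<beta>1 a1 S' R * ?m m v \<beta>2 a2 R S)))"
    for R
    unfolding mono_Suc_bool_sum by (simp add: bool_sum_def algebra_simps mono_insert_out
        mono_insert_in)
  have "mono_pair t a b c d e f (Suc m) u v g1 a1 g2 a2 S' S
     = (\<Sum>R\<in>Pow {1..m}. bool_sum (\<lambda>\<beta>1. bool_sum (\<lambda>\<beta>2. ?L u g1 (Suc m \<in> S') \<beta>1 False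
         * ?L v g2 False \<beta>2 (Suc m \<in> S) * (?m m u \<beta>1 a1 S' R * ?m m v \<beta>2 a2 R S))))
     + (\<Sum>R\<in>Pow {1..m}. bool_sum (\<lambda>\<beta>1. bool_sum (\<lambda>\<beta>2. ?L u g1 (Suc m \<in> S') \<beta>1 True
         * ?L v g2 True \<beta>2 (Suc m \<in> S) * (?m m u \<beta>1 a1 S' R * ?m m v \<beta>2 a2 R S))))"
    unfolding mono_pair_def sum_Pow_Suc by (intro arg_cong2[where f="(+)"] sum.cong refl A B)
  also have "\<dots> = bool_sum (\<lambda>\<beta>1. bool_sum (\<lambda>\<beta>2. bool_sum (\<lambda>r. ?L u g1 (Suc m \<in> S') \<beta>1 r
      * ?L v g2 r \<beta>2 (Suc m \<in> S)
        * mono_pair t a b c d e f m u v \<beta>1 a1 \<beta>2 a2 S' S)))"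
    unfolding mono_pair_def by (simp add: bool_sum_def sum.distrib sum_distrib_left algebra_simps)
  finally show ?thesis .
qed

lemma RTT_relation:
  assumes rel1: "c*d + a*f = 0" and rel2: "t*c*d + b*e = 0"
  shows "bool_sum (\<lambda>b1. bool_sum (\<lambda>b2. Rmat t u v g1 g2 b1 b2
      * mono_pair t a b c d e f m u v b1 a1 b2 a2 S' S))
       = bool_sum (\<lambda>b1. bool_sum (\<lambda>b2. mono_pair t a b c d e f m v u g2 b2 g1 b1 S' S
           * Rmat t u v b1 b2 a1 a2))"
proof (induction m arbitrary: g1 g2 a1 a2)
  case 0
  show ?case by (cases g1; cases g2; cases a1; cases a2)
      (simp_all add: mono_pair_def bool_sum_def Rmat_def)
next
  case (Suc m)
  define s1 where "s1 = (Suc m \<in> S')"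
  define s2 where "s2 = (Suc m \<in> S)"
  define K where "K b1 b2 \<beta>1 \<beta>2 = bool_sum (\<lambda>r. Lent t a b c d e f u b1 s1 \<beta>1 r
      * Lent t a b c d e f v b2 r \<beta>2 s2)" for b1 b2 \<beta>1 \<beta>2
  define K' where "K' o1 o2 = bool_sum (\<lambda>r. Lent t a b c d e f v g2 s1 o2 r
      * Lent t a b c d e f u g1 r o1 s2)" for o1 o2
  define Q where "Q \<beta>1 \<beta>2 = mono_pair t a b c d e f m u v \<beta>1 a1 \<beta>2 a2 S' S" for \<beta>1 \<beta>2
  define Q' where "Q' o1 o2 \<beta>1 \<beta>2 = mono_pair t a b c d e f m v u o2 \<beta>2 o1 \<beta>1 S' S" for o1 o2 \<beta>1 \<beta>2
  define R where "R x1 x2 y1 y2 = Rmat t u v x1 x2 y1 y2" for x1 x2 y1 y2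
  have P1: "mono_pair t a b c d e f (Suc m) u v b1 a1 b2 a2 S' S
      = bool_sum (\<lambda>\<beta>1. bool_sum (\<lambda>\<beta>2. K b1 b2 \<beta>1 \<beta>2 * Q \<beta>1 \<beta>2))" for b1 b2
    unfolding mono_pair_Suc K_def Q_def s1_def s2_def by (simp add: bool_sum_def algebra_simps)
  have P2: "mono_pair t a b c d e f (Suc m) v u g2 b2 g1 b1 S' S
      = bool_sum (\<lambda>o1. bool_sum (\<lambda>o2. K' o1 o2 * Q' o1 o2 b1 b2))" for b1 b2
    unfolding mono_pair_Suc K'_def Q'_def s1_def s2_def by (simp add: bool_sum_def algebra_simps)
  have ybe: "bool_sum (\<lambda>b1. bool_sum (\<lambda>b2. R g1 g2 b1 b2 * K b1 b2 \<beta>1 \<beta>2))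
      = bool_sum (\<lambda>o1. bool_sum (\<lambda>o2. K' o1 o2 * R o1 o2 \<beta>1 \<beta>2))" for \<beta>1 \<beta>2
    unfolding R_def K_def K'_def using RLL_relation[OF rel1 rel2] by blast
  have IH: "bool_sum (\<lambda>\<beta>1. bool_sum (\<lambda>\<beta>2. R o1 o2 \<beta>1 \<beta>2 * Q \<beta>1 \<beta>2))
      = bool_sum (\<lambda>b1. bool_sum (\<lambda>b2. Q' o1 o2 b1 b2 * R b1 b2 a1 a2))" for o1 o2
    unfolding R_def Q_def Q'_def by (rule Suc.IH)
  have "bool_sum (\<lambda>b1. bool_sum (\<lambda>b2. R g1 g2 b1 b2
      * mono_pair t a b c d e f (Suc m) u v b1 a1 b2 a2 S' S))
      = bool_sum (\<lambda>\<beta>1. bool_sum (\<lambda>\<beta>2. bool_sum (\<lambda>b1. bool_sum (\<lambda>b2. R g1 g2 b1 b2 * K b1 b2 \<beta>1 \<beta>2))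
          * Q \<beta>1 \<beta>2))"
    unfolding P1 by (simp add: bool_sum_def algebra_simps)
  also have "\<dots> = bool_sum (\<lambda>\<beta>1. bool_sum (\<lambda>\<beta>2. bool_sum (\<lambda>o1. bool_sum (\<lambda>o2. K' o1 o2
      * R o1 o2 \<beta>1 \<beta>2)) * Q \<beta>1 \<beta>2))"
    unfolding ybe ..
  also have "\<dots> = bool_sum (\<lambda>o1. bool_sum (\<lambda>o2. K' o1 o2
      * bool_sum (\<lambda>\<beta>1. bool_sum (\<lambda>\<beta>2. R o1 o2 \<beta>1 \<beta>2 * Q \<beta>1 \<beta>2))))"
    by (simp add: bool_sum_def algebra_simps)
  also have "\<dots> = bool_sum (\<lambda>o1. bool_sum (\<lambda>o2. K' o1 o2
      * bool_sum (\<lambda>b1. bool_sum (\<lambda>b2. Q' o1 o2 b1 b2 * R b1 b2 a1 a2))))"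
    unfolding IH ..
  also have "\<dots> = bool_sum (\<lambda>b1. bool_sum (\<lambda>b2. mono_pair t a b c d e f (Suc m) v u g2 b2 g1 b1 S' S
      * R b1 b2 a1 a2))"
    unfolding P2 by (simp add: bool_sum_def algebra_simps)
  finally show ?case unfolding R_def .
qed

definition act :: "nat \<Rightarrow> (nat set \<Rightarrow> nat set \<Rightarrow> complex) \<Rightarrow> vec \<Rightarrow> vec" where
  "act m X \<phi> = (\<lambda>S'. \<Sum>R\<in>Pow {1..m}. X S' R * \<phi> R)"

definition coact :: "nat \<Rightarrow> (nat set \<Rightarrow> nat set \<Rightarrow> complex) \<Rightarrow> vec \<Rightarrow> vec" where
  "coact m X \<phi> = (\<lambda>S. \<Sum>R\<in>Pow {1..m}. \<phi> R * X R S)"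

lemma act_act: "act m X (act m Y \<phi>) = (\<lambda>S'. \<Sum>S\<in>Pow {1..m}. (\<Sum>R\<in>Pow {1..m}. X S' R * Y R S) * \<phi> S)"
  unfolding act_def by (auto simp: sum_distrib_left sum_distrib_right mult.assoc intro: sum.swap)

lemma coact_coact: "coact m X (coact m Y \<phi>)
    = (\<lambda>S. \<Sum>R'\<in>Pow {1..m}. \<phi> R' * (\<Sum>R\<in>Pow {1..m}. Y R' R * X R S))"
  unfolding coact_def by (auto simp: sum_distrib_left sum_distrib_right mult.assoc mult.left_commute
      intro: sum.swap)

lemma act_sum: "finite (K::nat set) \<Longrightarrow> act m X (\<lambda>S. \<Sum>k\<in>K. c k * \<phi> k S)
    = (\<lambda>S. \<Sum>k\<in>K. c k * act m X (\<phi> k) S)"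
  unfolding act_def by (auto simp: sum_distrib_left mult.left_commute intro: sum.swap)

lemma act_lincomb: "act m X (\<lambda>S. c1 * \<phi> S + c2 * \<psi> S) = (\<lambda>S. c1 * act m X \<phi> S + c2 * act m X \<psi> S)"
  unfolding act_def by (auto simp: sum.distrib sum_distrib_left algebra_simps)

lemma coact_sum: "finite (K::nat set) \<Longrightarrow> coact m X (\<lambda>S. \<Sum>k\<in>K. c k * \<phi> k S)
    = (\<lambda>S. \<Sum>k\<in>K. c k * coact m X (\<phi> k) S)"
  unfolding coact_def by (auto simp: sum_distrib_left sum_distrib_right mult.assoc intro: sum.swap)

lemma coact_lincomb: "coact m X (\<lambda>S. c1 * \<phi> S + c2 * \<psi> S)
    = (\<lambda>S. c1 * coact m X \<phi> S + c2 * coact m X \<psi> S)"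
  unfolding coact_def by (auto simp: sum.distrib sum_distrib_left algebra_simps)

lemma act_smult: "act m X (\<lambda>S. c * \<phi> S) = (\<lambda>S. c * act m X \<phi> S)"
  unfolding act_def by (auto simp: sum_distrib_left algebra_simps)

lemma coact_smult: "coact m X (\<lambda>S. c * \<phi> S) = (\<lambda>S. c * coact m X \<phi> S)"
  unfolding coact_def by (auto simp: sum_distrib_left algebra_simps)

lemma local_mono_out: "local_on m (\<lambda>S'. mono t a b c d e f m u g \<alpha> S' R)"
  by (rule local_onI, rule mono_cong_sites) blast

lemma local_mono_in: "local_on m (\<lambda>S. mono t a b c d e f m u g \<alpha> R S)"
  by (rule local_onI, rule mono_cong_sites) blast

lemma local_act: "local_on m (act m (mono t a b c d e f m u g \<alpha>) \<phi>)"
proof (rule local_onI)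
  fix S S' assume e: "S \<inter> {1..m} = S' \<inter> {1..m}"
  show "act m (mono t a b c d e f m u g \<alpha>) \<phi> S = act m (mono t a b c d e f m u g \<alpha>) \<phi> S'"
    unfolding act_def by (rule sum.cong[OF refl]) (simp add: local_onD[OF local_mono_out e])
qed

lemma local_coact: "local_on m (coact m (mono t a b c d e f m u g \<alpha>) \<phi>)"
proof (rule local_onI)
  fix S S' assume e: "S \<inter> {1..m} = S' \<inter> {1..m}"
  show "coact m (mono t a b c d e f m u g \<alpha>) \<phi> S = coact m (mono t a b c d e f m u g \<alpha>) \<phi> S'"
    unfolding coact_def by (rule sum.cong[OF refl]) (simp add: local_onD[OF local_mono_in e])
qed

lemma act_act_mono_pair: "act m (mono t a b c d e f m w g1 a1) (act m
    (mono t a b c d e f m v g2 a2) \<phi>)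
   = (\<lambda>S'. \<Sum>S\<in>Pow {1..m}. mono_pair t a b c d e f m w v g1 a1 g2 a2 S' S * \<phi> S)"
  unfolding act_act mono_pair_def ..

lemma coact_coact_mono_pair: "coact m (mono t a b c d e f m w g1 a1) (coact m
    (mono t a b c d e f m v g2 a2) \<phi>)
   = (\<lambda>S. \<Sum>R\<in>Pow {1..m}. \<phi> R * mono_pair t a b c d e f m v w g2 a2 g1 a1 R S)"
  unfolding coact_coact mono_pair_def ..

lemma act_lincomb_kernel:
  fixes \<phi> :: vec
  assumes "\<And>S' S. P1 S' S = c1 * P2 S' S + c2 * P3 S' S"
  shows "(\<lambda>S'. \<Sum>S\<in>A. P1 S' S * \<phi> S) = (\<lambda>S'. c1 * (\<Sum>S\<in>A. P2 S' S * \<phi> S)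
      + c2 * (\<Sum>S\<in>A. P3 S' S * \<phi> S))"
  by (rule ext) (simp add: assms distrib_right sum.distrib sum_distrib_left mult.assoc)

lemma coact_lincomb_kernel:
  fixes \<phi> :: vec
  assumes "\<And>S' S. P1 S' S = c1 * P2 S' S + c2 * P3 S' S"
  shows "(\<lambda>S. \<Sum>R\<in>A. \<phi> R * P1 R S) = (\<lambda>S. c1 * (\<Sum>R\<in>A. \<phi> R * P2 R S) + c2 * (\<Sum>R\<in>A. \<phi> R * P3 R S))"
  by (rule ext) (simp add: assms distrib_left sum.distrib sum_distrib_left mult.left_commute)

context
  fixes t a b c d e f :: complex
  assumes rel1: "c*d + a*f = 0" and rel2: "t*c*d + b*e = 0"
begin

abbreviation "P \<equiv> mono_pair t a b c d e f"

lemma RTT: "bool_sum (\<lambda>b1. bool_sum (\<lambda>b2. Rmat t u v g1 g2 b1 b2 * P m u v b1 a1 b2 a2 S' S))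
       = bool_sum (\<lambda>b1. bool_sum (\<lambda>b2. P m v u g2 b2 g1 b1 S' S * Rmat t u v b1 b2 a1 a2))"
  by (rule RTT_relation[OF rel1 rel2])

lemma BB_commute: "(u - t*v) * P m u v False True False True S' S
    = (u - t*v) * P m v u False True False True S' S"
  using RTT[of u v False False m True True S' S] by (simp add: bool_sum_def Rmat_def ac_simps)

lemma CC_commute: "(u - t*v) * P m u v True False True False S' S
    = (u - t*v) * P m v u True False True False S' S"
  using RTT[of u v True True m False False S' S] by (simp add: bool_sum_def Rmat_def ac_simps)

lemma DB_exchange: "(u - v) * P m u v True True False True S' S
    = (u - t*v) * P m v u False True True True S' S + (t - 1)*v * P m u v False True True True S' S"
proof -
  have "(u - v) * P m u v True True False True S' S + (1-t)*v * P m u v False True True True S' S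
      = (u - t*v) * P m v u False True True True S' S"
    using RTT[of u v True False m True True S' S] by (simp add: bool_sum_def Rmat_def ac_simps)
  then show ?thesis by algebra
qed

lemma CA_exchange: "(u - v) * P m u v True False False False S' S
    = (u - t*v) * P m v u False False True False S' S
        + (t - 1)*v * P m u v False False True False S' S"
proof -
  have "(u - v) * P m u v True False False False S' S
      + (1-t)*v * P m u v False False True False S' S
          = (u - t*v) * P m v u False False True False S' S"
    using RTT[of u v True False m False False S' S] by (simp add: bool_sum_def Rmat_def ac_simps)
  then show ?thesis by algebra
qed

lemma BD_exchange: "t*(u - v) * P m u v False True True True S' S
    = (u - t*v) * P m v u True True False True S' S + (t - 1)*u * P m u v True True False True S' S"
proof -
  have "t*(u - v) * P m u v False True True True S' S + (1-t)*u * P m u v True True False True S' S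
      = (u - t*v) * P m v u True True False True S' S"
    using RTT[of u v False True m True True S' S] by (simp add: bool_sum_def Rmat_def ac_simps)
  then show ?thesis by algebra
qed

lemma AC_exchange: "t*(u - v) * P m u v False False True False S' S
    = (u - t*v) * P m v u True False False False S' S
        + (t - 1)*u * P m u v True False False False S' S"
proof -
  have "t*(u - v) * P m u v False False True False S' S
      + (1-t)*u * P m u v True False False False S' S
          = (u - t*v) * P m v u True False False False S' S"
    using RTT[of u v False True m False False S' S] by (simp add: bool_sum_def Rmat_def ac_simps)
  then show ?thesis by algebra
qed

end

definition site_off :: "nat \<Rightarrow> vec \<Rightarrow> vec" where "site_off m \<phi> = (\<lambda>R. \<phi> (R - {Suc m}))"

definition site_on :: "nat \<Rightarrow> vec \<Rightarrow> vec" where "site_on m \<phi> = (\<lambda>R. \<phi> (insert (Suc m) R))"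

lemma act_Suc: "act (Suc m) (mono t a b c d e f (Suc m) w g \<alpha>) \<psi> S' =
  bool_sum (\<lambda>\<beta>. Lent t a b c d e f w g (Suc m \<in> S') \<beta> False
      * act m (mono t a b c d e f m w \<beta> \<alpha>) (site_off m \<psi>) S'
           + Lent t a b c d e f w g (Suc m \<in> S') \<beta> True
               * act m (mono t a b c d e f m w \<beta> \<alpha>) (site_on m \<psi>) S')"
proof -
  let ?L = "Lent t a b c d e f" and ?m = "mono t a b c d e f"
  have A: "?m (Suc m) w g \<alpha> S' R * \<psi> R = bool_sum (\<lambda>\<beta>. ?L w g (Suc m \<in> S') \<beta> False
      * (?m m w \<beta> \<alpha> S' R * site_off m \<psi> R))"
    if "R \<in> Pow {1..m}" for R
  proof -
    have "Suc m \<notin> R" "R - {Suc m} = R" using that by auto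
    then show ?thesis unfolding mono_Suc_bool_sum site_off_def
      by (simp add: bool_sum_def algebra_simps)
  qed
  have B: "?m (Suc m) w g \<alpha> S' (insert (Suc m) R) * \<psi> (insert (Suc m) R)
      = bool_sum (\<lambda>\<beta>. ?L w g (Suc m \<in> S') \<beta> True * (?m m w \<beta> \<alpha> S' R * site_on m \<psi> R))" for R
    unfolding mono_Suc_bool_sum site_on_def by (simp add: bool_sum_def algebra_simps mono_insert_in)
  have "act (Suc m) (?m (Suc m) w g \<alpha>) \<psi> S'
      = (\<Sum>R\<in>Pow {1..m}. bool_sum (\<lambda>\<beta>. ?L w g (Suc m \<in> S') \<beta> False * (?m m w \<beta> \<alpha> S' R
          * site_off m \<psi> R)))
     + (\<Sum>R\<in>Pow {1..m}. bool_sum (\<lambda>\<beta>. ?L w g (Suc m \<in> S') \<beta> True * (?m m w \<beta> \<alpha> S' R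
         * site_on m \<psi> R)))"
    unfolding act_def sum_Pow_Suc by (intro arg_cong2[where f="(+)"] sum.cong refl A B)
  also have "\<dots> = bool_sum (\<lambda>\<beta>. ?L w g (Suc m \<in> S') \<beta> False * act m (?m m w \<beta> \<alpha>) (site_off m \<psi>) S'
           + ?L w g (Suc m \<in> S') \<beta> True * act m (?m m w \<beta> \<alpha>) (site_on m \<psi>) S')"
    unfolding act_def by (simp add: bool_sum_def sum.distrib sum_distrib_left algebra_simps)
  finally show ?thesis .
qed

lemma coact_Suc: "coact (Suc m) (mono t a b c d e f (Suc m) w g \<alpha>) \<psi> S =
  bool_sum (\<lambda>\<beta>. Lent t a b c d e f w g False \<beta> (Suc m \<in> S)
      * coact m (mono t a b c d e f m w \<beta> \<alpha>) (site_off m \<psi>) S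
           + Lent t a b c d e f w g True \<beta> (Suc m \<in> S)
               * coact m (mono t a b c d e f m w \<beta> \<alpha>) (site_on m \<psi>) S)"
proof -
  let ?L = "Lent t a b c d e f" and ?m = "mono t a b c d e f"
  have A: "\<psi> R * ?m (Suc m) w g \<alpha> R S = bool_sum (\<lambda>\<beta>. ?L w g False \<beta> (Suc m \<in> S) * (site_off m \<psi> R
      * ?m m w \<beta> \<alpha> R S))"
    if "R \<in> Pow {1..m}" for R
  proof -
    have "Suc m \<notin> R" "R - {Suc m} = R" using that by auto
    then show ?thesis unfolding mono_Suc_bool_sum site_off_def
      by (simp add: bool_sum_def algebra_simps)
  qed
  have B: "\<psi> (insert (Suc m) R) * ?m (Suc m) w g \<alpha> (insert (Suc m) R) S
      = bool_sum (\<lambda>\<beta>. ?L w g True \<beta> (Suc m \<in> S) * (site_on m \<psi> R * ?m m w \<beta> \<alpha> R S))" for R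
    unfolding mono_Suc_bool_sum site_on_def
        by (simp add: bool_sum_def algebra_simps mono_insert_out)
  have "coact (Suc m) (?m (Suc m) w g \<alpha>) \<psi> S
      = (\<Sum>R\<in>Pow {1..m}. bool_sum (\<lambda>\<beta>. ?L w g False \<beta> (Suc m \<in> S) * (site_off m \<psi> R
          * ?m m w \<beta> \<alpha> R S)))
     + (\<Sum>R\<in>Pow {1..m}. bool_sum (\<lambda>\<beta>. ?L w g True \<beta> (Suc m \<in> S) * (site_on m \<psi> R * ?m m w \<beta> \<alpha> R S)))"
    unfolding coact_def sum_Pow_Suc by (intro arg_cong2[where f="(+)"] sum.cong refl A B)
  also have "\<dots> = bool_sum (\<lambda>\<beta>. ?L w g False \<beta> (Suc m \<in> S) * coact m (?m m w \<beta> \<alpha>) (site_off m \<psi>) S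
           + ?L w g True \<beta> (Suc m \<in> S) * coact m (?m m w \<beta> \<alpha>) (site_on m \<psi>) S)"
    unfolding coact_def by (simp add: bool_sum_def sum.distrib sum_distrib_left algebra_simps)
  finally show ?thesis .
qed

lemma site_off_if_in: "local_on m G0 \<Longrightarrow> site_off m (\<lambda>S. if Suc m \<in> S then G1 S else G0 S) = G0"
  unfolding site_off_def by (rule ext) (auto intro: local_onD)

lemma site_on_if_in: "local_on m G1 \<Longrightarrow> site_on m (\<lambda>S. if Suc m \<in> S then G1 S else G0 S) = G1"
  unfolding site_on_def by (rule ext) (auto intro: local_onD)

lemma site_on_if_notin: "local_on m G0 \<Longrightarrow> site_on m (\<lambda>S. if Suc m \<notin> S then G1 S else G0 S) = G0"
  unfolding site_on_def by (rule ext) (auto intro: local_onD)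

lemma site_off_if_notin: "local_on m G1 \<Longrightarrow> site_off m (\<lambda>S. if Suc m \<notin> S then G1 S else G0 S) = G1"
  unfolding site_off_def by (rule ext) (auto intro: local_onD)

definition vacuum :: "nat \<Rightarrow> vec" where "vacuum m = (\<lambda>S. if S \<inter> {1..m} = {} then 1 else 0)"

definition filled :: "nat \<Rightarrow> vec" where "filled m = (\<lambda>S. if {1..m} \<subseteq> S then 1 else 0)"

lemma vacuum_Suc: "vacuum (Suc m) = (\<lambda>S. if Suc m \<in> S then 0 else vacuum m S)"
  by (rule ext) (auto simp: vacuum_def atLeastAtMostSuc_conv)

lemma filled_Suc: "filled (Suc m) = (\<lambda>S. if Suc m \<notin> S then 0 else filled m S)"
  by (rule ext) (auto simp: filled_def atLeastAtMostSuc_conv)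

lemma local_vacuum: "local_on m (vacuum m)" unfolding vacuum_def by (rule local_onI) auto

lemma local_filled: "local_on m (filled m)" unfolding filled_def by (rule local_onI) auto

lemma sum_vacuum: "(\<Sum>R\<in>Pow {1..m}. F R * vacuum m R) = F {}"
proof -
  have "(\<Sum>R\<in>Pow {1..m}. F R * vacuum m R) = (\<Sum>R\<in>Pow {1..m}. if R = {} then F R else 0)"
    by (rule sum.cong) (auto simp: vacuum_def Int_absorb2)
  also have "\<dots> = F {}" by (simp add: sum.delta')
  finally show ?thesis .
qed

lemma sum_filled: "(\<Sum>R\<in>Pow {1..m}. F R * filled m R) = F {1..m}"
proof -
  have "(\<Sum>R\<in>Pow {1..m}. F R * filled m R) = (\<Sum>R\<in>Pow {1..m}. if R = {1..m} then F R else 0)"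
    by (rule sum.cong) (auto simp: filled_def)
  also have "\<dots> = F {1..m}" by (simp add: sum.delta')
  finally show ?thesis .
qed

lemma sum_vacuum_left: "(\<Sum>R\<in>Pow {1..m}. vacuum m R * F R) = F {}"
  using sum_vacuum[where F=F and m=m] by (simp add: ac_simps)

lemma sum_filled_left: "(\<Sum>R\<in>Pow {1..m}. filled m R * F R) = F {1..m}"
  using sum_filled[where F=F and m=m] by (simp add: ac_simps)

lemma mono_D_vacuum: "mono t a b c d e f m w True True S' {} = (e*w+f)^m * vacuum m S'"
  by (induction m) (auto simp: vacuum_Suc Lent_def, simp add: vacuum_def)

lemma mono_A_filled: "mono t a b c d e f m w False False S' {1..m} = (a*t*w+b)^m * filled m S'"
proof (induction m)
  case 0 then show ?case by (simp add: filled_def)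
next
  case (Suc m)
  have "mono t a b c d e f m w False False S' {1..Suc m}
      = mono t a b c d e f m w False False S' {1..m}"
    by (rule mono_cong_sites) auto
  then show ?case using Suc by (auto simp: filled_Suc Lent_def)
qed

lemma mono_A_vacuum: "mono t a b c d e f m w False False {} S = (a*w+b)^m * vacuum m S"
  by (induction m) (auto simp: vacuum_Suc Lent_def, simp add: vacuum_def)

lemma mono_D_filled: "mono t a b c d e f m w True True {1..m} S = (e*w+t*f)^m * filled m S"
proof (induction m)
  case 0 then show ?case by (simp add: filled_def)
next
  case (Suc m)
  have "mono t a b c d e f m w True True {1..Suc m} S = mono t a b c d e f m w True True {1..m} S"
    by (rule mono_cong_sites) auto
  then show ?case using Suc by (auto simp: filled_Suc Lent_def)
qed

lemma act_D_vacuum: "act m (mono t a b c d e f m w True True) (vacuum m)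
    = (\<lambda>S. (e*w+f)^m * vacuum m S)"
  unfolding act_def sum_vacuum mono_D_vacuum ..

lemma act_A_filled: "act m (mono t a b c d e f m w False False) (filled m)
    = (\<lambda>S. (a*t*w+b)^m * filled m S)"
  unfolding act_def sum_filled mono_A_filled ..

lemma coact_A_vacuum: "coact m (mono t a b c d e f m w False False) (vacuum m)
    = (\<lambda>S. (a*w+b)^m * vacuum m S)"
  unfolding coact_def sum_vacuum_left mono_A_vacuum ..

lemma coact_D_filled: "coact m (mono t a b c d e f m w True True) (filled m)
    = (\<lambda>S. (e*w+t*f)^m * filled m S)"
  unfolding coact_def sum_filled_left mono_D_filled ..

lemma last_particle_at_site:
  assumes sm: "strict_mono_on {1..Suc n} x" and im: "x ` {1..Suc n} \<subseteq> {1..Suc m}"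
  shows "(Suc m \<in> x ` {1..Suc n}) = (x (Suc n) = Suc m)"
proof
  assume "Suc m \<in> x ` {1..Suc n}"
  then obtain j where j: "j \<in> {1..Suc n}" "x j = Suc m" by auto
  show "x (Suc n) = Suc m"
  proof (cases "j = Suc n")
    case True then show ?thesis using j by simp
  next
    case False
    then have jl: "j < Suc n" using j by auto
    have sn: "Suc n \<in> {1..Suc n}" by simp
    have "x j < x (Suc n)" by (rule strict_mono_onD[OF sm j(1) sn jl])
    moreover have "x (Suc n) \<in> {1..Suc m}" using imageI[OF sn, of x] im by (rule subsetD[rotated])
    ultimately show ?thesis using j by auto
  qed
next
  assume "x (Suc n) = Suc m"
  moreover have "Suc n \<in> {1..Suc n}" by simp
  ultimately show "Suc m \<in> x ` {1..Suc n}" by (metis imageI)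
qed

lemma particles_drop_last: "x (Suc n) = Suc m \<Longrightarrow> x ` {1..Suc n} \<inter> {1..m} = x ` {1..n} \<inter> {1..m}"
proof -
  assume "x (Suc n) = Suc m"
  moreover have "{1..Suc n} = insert (Suc n) {1..n}" by auto
  ultimately show ?thesis by auto
qed

lemma last_hole_at_site:
  assumes sm: "strict_mono_on {1..Suc n} x" and im: "x ` {1..Suc n} \<subseteq> {1..Suc m}"
  shows "(Suc m \<notin> {1..Suc m} - x ` {1..Suc n}) = (x (Suc n) = Suc m)"
proof -
  have "Suc m \<in> {1..Suc m}" by simp
  then have "(Suc m \<notin> {1..Suc m} - x ` {1..Suc n}) = (Suc m \<in> x ` {1..Suc n})" by blast
  then show ?thesis using last_particle_at_site[OF sm im] by simp
qed

lemma holes_drop_site: "({1..Suc m} - X) \<inter> {1..m} = ({1..m} - X) \<inter> {1..m}" by auto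

lemma holes_drop_last: "x (Suc n) = Suc m \<Longrightarrow> ({1..Suc m} - x ` {1..Suc n}) \<inter> {1..m}
    = ({1..m} - x ` {1..n}) \<inter> {1..m}"
proof -
  assume "x (Suc n) = Suc m"
  moreover have "{1..Suc n} = insert (Suc n) {1..n}" by auto
  ultimately show ?thesis by auto
qed

lemma oplist_eq_chain_act:
  assumes S0: "\<forall>R\<in>Pow {1..M}. om R = (if R = S0 then 1 else 0)"
  shows "\<forall>S'\<in>Pow {1..M}. oplist M (map (\<lambda>j. X (u j)) (rev [1..<n+1])) S' S0
      = chain (\<lambda>w. act M (X w)) om u n S'"
proof (induction n)
  case 0 then show ?case using S0 by simp
next
  case (Suc n)
  show ?case
  proof
    fix S' assume "S' \<in> Pow {1..M}"
    have r: "rev [1..<Suc n + 1] = Suc n # rev [1..<n+1]" by simp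
    have "oplist M (map (\<lambda>j. X (u j)) (rev [1..<Suc n+1])) S' S0
        = (\<Sum>R\<in>Pow {1..M}. X (u (Suc n)) S' R * oplist M (map (\<lambda>j. X (u j)) (rev [1..<n+1])) R S0)"
      unfolding r by (simp add: opmul_def)
    also have "\<dots> = (\<Sum>R\<in>Pow {1..M}. X (u (Suc n)) S' R * chain (\<lambda>w. act M (X w)) om u n R)"
      using Suc by (intro sum.cong) auto
    finally show "oplist M (map (\<lambda>j. X (u j)) (rev [1..<Suc n+1])) S' S0
        = chain (\<lambda>w. act M (X w)) om u (Suc n) S'"
      by (simp add: act_def)
  qed
qed

lemma oplist_snoc:
  "S' \<in> Pow {1..M} \<Longrightarrow> S \<in> Pow {1..M} \<Longrightarrow> oplist M (Xs @ [Y]) S' S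
      = (\<Sum>R\<in>Pow {1..M}. oplist M Xs S' R * Y R S)"
proof (induction Xs arbitrary: S')
  case Nil
  have d1: "(if P then 1 else 0) * (y::complex) = (if P then y else 0)" for P y by simp
  have d2: "(y::complex) * (if P then 1 else 0) = (if P then y else 0)" for P y by simp
  have "oplist M [Y] S' S = Y S' S" using Nil by (simp add: opmul_def d2 sum.delta')
  moreover have "(\<Sum>R\<in>Pow {1..M}. oplist M [] S' R * Y R S) = Y S' S"
    using Nil by (simp add: d1 sum.delta)
  ultimately show ?case by simp
next
  case (Cons X Xs)
  have "oplist M ((X # Xs) @ [Y]) S' S
      = (\<Sum>R\<in>Pow {1..M}. X S' R * (\<Sum>R'\<in>Pow {1..M}. oplist M Xs R R' * Y R' S))"
    using Cons by (simp add: opmul_def)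
  also have "\<dots> = (\<Sum>R'\<in>Pow {1..M}. (\<Sum>R\<in>Pow {1..M}. X S' R * oplist M Xs R R') * Y R' S)"
    by (simp add: sum_distrib_left sum_distrib_right mult.assoc) (rule sum.swap)
  also have "\<dots> = (\<Sum>R\<in>Pow {1..M}. oplist M (X # Xs) S' R * Y R S)" by (simp add: opmul_def)
  finally show ?case .
qed

lemma oplist_eq_chain_coact:
  assumes S0: "\<forall>R\<in>Pow {1..M}. om R = (if R = S0 then 1 else 0)" and S0M: "S0 \<in> Pow {1..M}"
  shows "\<forall>S\<in>Pow {1..M}. oplist M (map (\<lambda>j. X (u j)) [1..<n+1]) S0 S
      = chain (\<lambda>w. coact M (X w)) om u n S"
proof (induction n)
  case 0 then show ?case using S0 by auto
next
  case (Suc n)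
  show ?case
  proof
    fix S assume S: "S \<in> Pow {1..M}"
    have r: "[1..<Suc n + 1] = [1..<n+1] @ [Suc n]" by simp
    have "oplist M (map (\<lambda>j. X (u j)) [1..<Suc n+1]) S0 S
        = (\<Sum>R\<in>Pow {1..M}. oplist M (map (\<lambda>j. X (u j)) [1..<n+1]) S0 R * X (u (Suc n)) R S)"
      unfolding r by (simp add: oplist_snoc[OF S0M S])
    also have "\<dots> = (\<Sum>R\<in>Pow {1..M}. chain (\<lambda>w. coact M (X w)) om u n R * X (u (Suc n)) R S)"
      using Suc by (intro sum.cong) auto
    finally show "oplist M (map (\<lambda>j. X (u j)) [1..<Suc n+1]) S0 S
        = chain (\<lambda>w. coact M (X w)) om u (Suc n) S"
      by (simp add: coact_def)
  qed
qed

section \<open>The four Bethe vectors\<close>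

lemma solve_linear:
  fixes \<delta> :: "'a::field"
  assumes "\<delta> \<noteq> 0" and "\<delta> * x = \<mu> * y + \<kappa> * z"
  shows "x = \<mu> / \<delta> * y + \<kappa> / \<delta> * z"
  using assms by (simp add: field_simps)

lemma power_ratio_cancel:
  fixes K x y :: complex
  assumes x: "x \<noteq> 0" and y: "y \<noteq> 0"
  shows "K/x * y^Suc m * (x/y)^Suc m = K * x^m"
proof -
  have p: "y^Suc m \<noteq> 0" using y by simp
  have "K/x * y^Suc m * (x/y)^Suc m = K/x * (y^Suc m * (x^Suc m / y^Suc m))"
    by (simp only: power_divide mult.assoc)
  also have "\<dots> = K/x * x^Suc m" using p by simp
  also have "\<dots> = K * x^m" using x by simp
  finally show ?thesis .
qed

context
  fixes t a b c d e f :: complex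
  assumes nzt: "t \<noteq> 0" and rel1: "c*d + a*f = 0" and rel2: "t*c*d + b*e = 0"
begin

definition generic_pair :: "complex \<Rightarrow> complex \<Rightarrow> bool" where
  "generic_pair v w \<longleftrightarrow> v \<noteq> w \<and> t*v \<noteq> w \<and> t*w \<noteq> v"

definition regular_point :: "complex \<Rightarrow> bool" where
  "regular_point w \<longleftrightarrow> a*w+b \<noteq> 0 \<and> e*w+f \<noteq> 0 \<and> a*t*w+b \<noteq> 0 \<and> e*w+t*f \<noteq> 0"

lemma generic_pair_sym: "generic_pair v w \<Longrightarrow> generic_pair w v" by (auto simp: generic_pair_def)

text \<open>mo m w \<gamma> \<alpha> is the entry <\<gamma>| T(w) |\<alpha>> of the monodromy matrix on m sites, so A, B, C, D
  correspond to (\<gamma>, \<alpha>) = (False, False), (False, True), (True, False), (True, True).\<close>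
abbreviation "mo \<equiv> mono t a b c d e f"
abbreviation "PP \<equiv> mono_pair t a b c d e f"

definition "fc_B v w = (w - t*v)/(w - v)"
definition "gc_B x y = (t - 1)*y/(x - y)"

lemma exchange_algebra_B: "exchange_algebra (\<lambda>w. act m (mo m w False True))
    (\<lambda>w. act m (mo m w True True)) (vacuum m) fc_B gc_B (\<lambda>w. (e*w+f)^m) generic_pair"
proof (rule exchange_algebra.intro)
  show "act m (mo m w False True) (\<lambda>S. \<Sum>k\<in>K. c k * \<phi> k S)
      = (\<lambda>S. \<Sum>k\<in>K. c k * act m (mo m w False True) (\<phi> k) S)"
    if "finite K" for K :: "nat set" and w c \<phi> using act_sum[OF that] .
  show "act m (mo m w2 False True) (\<lambda>S. c1 * \<phi>1 S + c2 * \<psi>1 S)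
      = (\<lambda>S. c1 * act m (mo m w2 False True) \<phi>1 S + c2 * act m (mo m w2 False True) \<psi>1 S)"
    for w2 c1 \<phi>1 c2 \<psi>1 by (rule act_lincomb)
  show "act m (mo m v False True) (act m (mo m w False True) \<phi>2)
      = act m (mo m w False True) (act m (mo m v False True) \<phi>2)"
    if "generic_pair v w" for v w \<phi>2
  proof -
    have "PP m v w False True False True S' S = PP m w v False True False True S' S" for S' S
      using BB_commute[OF rel1 rel2, of v w m S' S] that by (auto simp: generic_pair_def)
    then show ?thesis unfolding act_act_mono_pair by simp
  qed
  show "act m (mo m w True True) (act m (mo m v False True) \<phi>2) =
      (\<lambda>S. fc_B v w * act m (mo m v False True) (act m (mo m w True True) \<phi>2) S
          + gc_B w v * act m (mo m w False True) (act m (mo m v True True) \<phi>2) S)"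
    if "generic_pair v w" for v w \<phi>2
  proof -
    have "PP m w v True True False True S' S
        = fc_B v w * PP m v w False True True True S' S
            + gc_B w v * PP m w v False True True True S' S" for S' S
      unfolding fc_B_def gc_B_def
      by (rule solve_linear[OF _ DB_exchange[OF rel1 rel2]])
          (use that in \<open>auto simp: generic_pair_def\<close>)
    then show ?thesis unfolding act_act_mono_pair by (rule act_lincomb_kernel)
  qed
  show "act m (mo m w True True) (vacuum m)
      = (\<lambda>S. (e*w+f)^m * vacuum m S)" for w by (rule act_D_vacuum)
  show "fc_B v w * gc_B w z + gc_B w v * gc_B v z
      = gc_B w z * fc_B v z" if "generic_pair v w" "generic_pair w z" "generic_pair v z" for v w z
  proof -
    have n: "w - v \<noteq> 0" "z - w \<noteq> 0" "z - v \<noteq> 0" "w - z \<noteq> 0" "v - z \<noteq> 0" "v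
        - w \<noteq> 0" using that by (auto simp: generic_pair_def)
    show ?thesis unfolding fc_B_def gc_B_def
      using n by (simp add: divide_simps) (simp add: algebra_simps)
  qed
  show "generic_pair v w \<Longrightarrow> generic_pair w v" for v w by (rule generic_pair_sym)
qed

lemma site_recursion_B: "site_recursion (\<lambda>m w. act m (mo m w False True))
    (\<lambda>m w. act m (mo m w True True)) vacuum fc_B gc_B (\<lambda>m w. (e*w+f)^m) generic_pair regular_point
   (\<lambda>w. a*w+b) (\<lambda>w. a*t*w+b) (\<lambda>w. (1-t)*c*w) (\<lambda>m S. Suc m \<in> S) site_off site_on (\<lambda>m N x. x ` {1..N})
   (\<lambda>w. (1-t)*c*w/(e*w+f)) (\<lambda>w. (e*w+f)/(a*w+b)) (\<lambda>p q. (t*p - q)/(p - q)) (\<lambda>A B. (A - t*B)/(t*A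
       - B))"
proof (rule site_recursion.intro)
  show "exchange_algebra (\<lambda>w. act m (mo m w False True))
      (\<lambda>w. act m (mo m w True True)) (vacuum m) fc_B gc_B (\<lambda>w. (e*w+f)^m) generic_pair" for m
    by (rule exchange_algebra_B)
  show "local_on m (act m (mo m w False True) \<phi>)" for m w \<phi> by (rule local_act)
  show "local_on m (act m (mo m w True True) \<phi>)" for m w \<phi> by (rule local_act)
  show "local_on m (vacuum m)" for m by (rule local_vacuum)
  show "act m (mo m w True True) (\<lambda>S. c * \<phi> S)
      = (\<lambda>S. c * act m (mo m w True True) \<phi> S)" for m w c \<phi> by (rule act_smult)
  show "act (Suc m) (mo (Suc m) w False True) \<phi>
      = (\<lambda>S. if Suc m \<in> S then (a*t*w+b) * act m (mo m w False True) (site_on m \<phi>) S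
          + (1-t)*c*w * act m (mo m w True True) (site_off m \<phi>) S
       else (a*w+b) * act m (mo m w False True) (site_off m \<phi>) S)" for m w \<phi>
    by (rule ext) (simp add: act_Suc bool_sum_def Lent_def)
  show "vacuum (Suc m) = (\<lambda>S. if Suc m \<in> S then 0 else vacuum m S)" for m by (rule vacuum_Suc)
  show "local_on m G0 \<Longrightarrow> local_on m G1 \<Longrightarrow> site_off m (\<lambda>S. if Suc m \<in> S then G1 S else G0 S)
      = G0" for m G0 G1 by (rule site_off_if_in)
  show "local_on m G0 \<Longrightarrow> local_on m G1 \<Longrightarrow> site_on m (\<lambda>S. if Suc m \<in> S then G1 S else G0 S)
      = G1" for m G0 G1 by (rule site_on_if_in)
  show "vacuum m (x ` {1..0}) = 1" for m and x :: "nat \<Rightarrow> nat" by (simp add: vacuum_def)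
  show "strict_mono_on {1..Suc n} x \<Longrightarrow> x ` {1..Suc n} \<subseteq> {1..Suc m} \<Longrightarrow> (Suc m \<in> x ` {1..Suc n})
      = (x (Suc n) = Suc m)"
    for n x m by (rule last_particle_at_site)
  show "x ` {1..N} \<subseteq> {1..m} \<Longrightarrow> x ` {1..N} \<inter> {1..m} = x ` {1..N} \<inter> {1..m}" for x N m by (rule refl)
  show "strict_mono_on {1..Suc n} x \<Longrightarrow> x ` {1..Suc n} \<subseteq> {1..Suc m} \<Longrightarrow> x (Suc n) = Suc m \<Longrightarrow>
      x ` {1..Suc n} \<inter> {1..m} = x ` {1..n} \<inter> {1..m}" for n x m by (rule particles_drop_last)
  show "(1-t)*c*w/(e*w+f) * (a*w+b)^Suc m * ((e*w+f)/(a*w+b))^Suc m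
      = (1-t)*c*w * (e*w+f)^m" if "regular_point w" for w m
    using that by (intro power_ratio_cancel) (auto simp: regular_point_def)
  show "fc_B v w = (t*v - w)/(v - w)" if "generic_pair v w" for v w
  proof -
    have n: "w - v \<noteq> 0" "v - w \<noteq> 0" using that by (auto simp: generic_pair_def)
    then show ?thesis unfolding fc_B_def by (simp add: divide_simps) (simp add: algebra_simps)
  qed
  show "fc_B v w = (t*w - v)/(w - v) * ((w - t*v)/(t*w - v))" if "generic_pair v w" for v w
  proof -
    have n: "w - v \<noteq> 0" "t*w - v \<noteq> 0" using that by (auto simp: generic_pair_def)
    then show ?thesis unfolding fc_B_def by (simp add: divide_simps)
  qed
  show "(a*t*v+b) * ((1-t)*c*w) + (a*w+b) * ((1-t)*c*v) * gc_B v w = (1-t)*c*w * (a*v+b) * fc_B v w"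
    if "generic_pair v w" for v w
  proof -
    have "w - v \<noteq> 0" "v - w \<noteq> 0" using that by (auto simp: generic_pair_def)
    then show ?thesis unfolding fc_B_def gc_B_def
      by (simp add: divide_simps) (simp add: algebra_simps)
  qed
qed

lemma Gfun_eq_wavefunction: "Gfun t a b c d e f M N x u
    = wavefunction (\<lambda>w. (1-t)*c*w/(e*w+f)) (\<lambda>w. a*w+b) (\<lambda>p q. (t*p - q)/(p - q)) (\<lambda>A B. (A
        - t*B)/(t*A - B)) (\<lambda>w. (e*w+f)/(a*w+b)) M N x u"
  unfolding Gfun_def wavefunction_def by
      (simp add: times_divide_eq_left mult.commute mult.left_commute)

theorem B_product_on_vacuum:
  assumes sm: "strict_mono_on {1..N} x" and im: "x ` {1..N} \<subseteq> {1..M}" and g: "site_recursion.generic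
      generic_pair regular_point N u"
  shows "oplist M (map (\<lambda>j. Bop t a b c d e f M (u j)) (rev [1..<N+1])) (x ` {1..N}) {}
      = Gfun t a b c d e f M N x u"
proof -
  have m: "chain (\<lambda>w. act M (mo M w False True)) (vacuum M) u N (x ` {1..N})
      = Gfun t a b c d e f M N x u"
    unfolding Gfun_eq_wavefunction by (rule site_recursion.site_chain_eq_wavefunction[OF
        site_recursion_B sm im g])
  have om: "\<forall>R\<in>Pow {1..M}. vacuum M R = (if R
      = {} then 1 else 0)" by (auto simp: vacuum_def Int_absorb2)
  have "\<forall>S'\<in>Pow {1..M}. oplist M (map (\<lambda>j. mo M (u j) False True) (rev [1..<N+1])) S' {}
      = chain (\<lambda>w. act M (mo M w False True)) (vacuum M) u N S'"
    by (rule oplist_eq_chain_act[OF om])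
  then have "oplist M (map (\<lambda>j. mo M (u j) False True) (rev [1..<N+1])) (x ` {1..N}) {}
      = chain (\<lambda>w. act M (mo M w False True)) (vacuum M) u N (x ` {1..N})"
    using im by auto
  then show ?thesis unfolding Bop_def m .
qed

definition "fc_C v w = (v - t*w)/(v - w)"
definition "gc_C x y = (t - 1)*x/(y - x)"

lemma exchange_algebra_C: "exchange_algebra (\<lambda>w. coact m (mo m w True False))
    (\<lambda>w. coact m (mo m w False False)) (vacuum m) fc_C gc_C (\<lambda>w. (a*w+b)^m) generic_pair"
proof (rule exchange_algebra.intro)
  show "coact m (mo m w True False) (\<lambda>S. \<Sum>k\<in>K. c k * \<phi> k S)
      = (\<lambda>S. \<Sum>k\<in>K. c k * coact m (mo m w True False) (\<phi> k) S)"
    if "finite K" for K :: "nat set" and w c \<phi> using coact_sum[OF that] .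
  show "coact m (mo m w2 True False) (\<lambda>S. c1 * \<phi>1 S + c2 * \<psi>1 S)
      = (\<lambda>S. c1 * coact m (mo m w2 True False) \<phi>1 S + c2 * coact m (mo m w2 True False) \<psi>1 S)"
    for w2 c1 \<phi>1 c2 \<psi>1 by (rule coact_lincomb)
  show "coact m (mo m v True False) (coact m (mo m w True False) \<phi>2)
      = coact m (mo m w True False) (coact m (mo m v True False) \<phi>2)"
    if "generic_pair v w" for v w \<phi>2
  proof -
    have "PP m v w True False True False S' S = PP m w v True False True False S' S" for S' S
      using CC_commute[OF rel1 rel2, of v w m S' S] CC_commute[OF rel1 rel2, of w v m S' S] that
          by (auto simp: generic_pair_def)
    then show ?thesis unfolding coact_coact_mono_pair by simp
  qed
  show "coact m (mo m w False False) (coact m (mo m v True False) \<phi>2) =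
      (\<lambda>S. fc_C v w * coact m (mo m v True False) (coact m (mo m w False False) \<phi>2) S
          + gc_C w v * coact m (mo m w True False) (coact m (mo m v False False) \<phi>2) S)"
    if "generic_pair v w" for v w \<phi>2
  proof -
    have "PP m v w True False False False S' S
        = fc_C v w * PP m w v False False True False S' S
            + gc_C w v * PP m v w False False True False S' S" for S' S
      unfolding fc_C_def gc_C_def
      by (rule solve_linear[OF _ CA_exchange[OF rel1 rel2]])
          (use that nzt in \<open>auto simp: generic_pair_def\<close>)
    then show ?thesis unfolding coact_coact_mono_pair by (rule coact_lincomb_kernel)
  qed
  show "coact m (mo m w False False) (vacuum m)
      = (\<lambda>S. (a*w+b)^m * vacuum m S)" for w by (rule coact_A_vacuum)
  show "fc_C v w * gc_C w z + gc_C w v * gc_C v z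
      = gc_C w z * fc_C v z" if "generic_pair v w" "generic_pair w z" "generic_pair v z" for v w z
  proof -
    have n: "w - v \<noteq> 0" "z - w \<noteq> 0" "z - v \<noteq> 0" "w - z \<noteq> 0" "v - z \<noteq> 0" "v
        - w \<noteq> 0" "t \<noteq> 0" using that nzt by (auto simp: generic_pair_def)
    show ?thesis unfolding fc_C_def gc_C_def
      using n by (simp add: divide_simps) (simp add: algebra_simps)
  qed
  show "generic_pair v w \<Longrightarrow> generic_pair w v" for v w by (rule generic_pair_sym)
qed

lemma site_recursion_C: "site_recursion (\<lambda>m w. coact m (mo m w True False))
    (\<lambda>m w. coact m (mo m w False False)) vacuum fc_C gc_C
        (\<lambda>m w. (a*w+b)^m) generic_pair regular_point
   (\<lambda>w. e*w+f) (\<lambda>w. e*w+t*f) (\<lambda>w. (1-t)*d) (\<lambda>m S. Suc m \<in> S) site_off site_on (\<lambda>m N x. x ` {1..N})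
   (\<lambda>w. (1-t)*d/(a*w+b)) (\<lambda>w. (a*w+b)/(e*w+f)) (\<lambda>p q. (p - t*q)/(p - q)) (\<lambda>A B. (t*A - B)/(A
       - t*B))"
proof (rule site_recursion.intro)
  show "exchange_algebra (\<lambda>w. coact m (mo m w True False))
      (\<lambda>w. coact m (mo m w False False)) (vacuum m) fc_C gc_C (\<lambda>w. (a*w+b)^m) generic_pair" for m
    by (rule exchange_algebra_C)
  show "local_on m (coact m (mo m w True False) \<phi>)" for m w \<phi> by (rule local_coact)
  show "local_on m (coact m (mo m w False False) \<phi>)" for m w \<phi> by (rule local_coact)
  show "local_on m (vacuum m)" for m by (rule local_vacuum)
  show "coact m (mo m w False False) (\<lambda>S. c * \<phi> S)
      = (\<lambda>S. c * coact m (mo m w False False) \<phi> S)" for m w c \<phi> by (rule coact_smult)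
  show "coact (Suc m) (mo (Suc m) w True False) \<phi>
      = (\<lambda>S. if Suc m \<in> S then (e*w+t*f) * coact m (mo m w True False) (site_on m \<phi>) S
          + (1-t)*d * coact m (mo m w False False) (site_off m \<phi>) S
       else (e*w+f) * coact m (mo m w True False) (site_off m \<phi>) S)" for m w \<phi>
    by (rule ext) (simp add: coact_Suc bool_sum_def Lent_def)
  show "vacuum (Suc m) = (\<lambda>S. if Suc m \<in> S then 0 else vacuum m S)" for m by (rule vacuum_Suc)
  show "local_on m G0 \<Longrightarrow> local_on m G1 \<Longrightarrow> site_off m (\<lambda>S. if Suc m \<in> S then G1 S else G0 S)
      = G0" for m G0 G1 by (rule site_off_if_in)
  show "local_on m G0 \<Longrightarrow> local_on m G1 \<Longrightarrow> site_on m (\<lambda>S. if Suc m \<in> S then G1 S else G0 S)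
      = G1" for m G0 G1 by (rule site_on_if_in)
  show "vacuum m (x ` {1..0}) = 1" for m and x :: "nat \<Rightarrow> nat" by (simp add: vacuum_def)
  show "strict_mono_on {1..Suc n} x \<Longrightarrow> x ` {1..Suc n} \<subseteq> {1..Suc m} \<Longrightarrow> (Suc m \<in> x ` {1..Suc n})
      = (x (Suc n) = Suc m)"
    for n x m by (rule last_particle_at_site)
  show "x ` {1..N} \<subseteq> {1..m} \<Longrightarrow> x ` {1..N} \<inter> {1..m} = x ` {1..N} \<inter> {1..m}" for x N m by (rule refl)
  show "strict_mono_on {1..Suc n} x \<Longrightarrow> x ` {1..Suc n} \<subseteq> {1..Suc m} \<Longrightarrow> x (Suc n) = Suc m \<Longrightarrow>
      x ` {1..Suc n} \<inter> {1..m} = x ` {1..n} \<inter> {1..m}" for n x m by (rule particles_drop_last)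
  show "(1-t)*d/(a*w+b) * (e*w+f)^Suc m * ((a*w+b)/(e*w+f))^Suc m
      = (1-t)*d * (a*w+b)^m" if "regular_point w" for w m
    using that by (intro power_ratio_cancel) (auto simp: regular_point_def)
  show "fc_C v w = (v - t*w)/(v - w)" if "generic_pair v w" for v w unfolding fc_C_def ..
  show "fc_C v w = (w - t*v)/(w - v) * ((t*w - v)/(w - t*v))" if "generic_pair v w" for v w
  proof -
    have n: "w - v \<noteq> 0" "v - w \<noteq> 0" "w - t*v \<noteq> 0" using that by (auto simp: generic_pair_def)
    then show ?thesis unfolding fc_C_def by (simp add: divide_simps) (simp add: algebra_simps)
  qed
  show "(e*v+t*f) * ((1-t)*d) + (e*w+f) * ((1-t)*d) * gc_C v w
      = (1-t)*d * (e*v+f) * fc_C v w" if "generic_pair v w" "regular_point v" "regular_point w"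
          for v w
  proof -
    have n: "w - v \<noteq> 0" "v - w \<noteq> 0" using that by (auto simp: generic_pair_def)
    then show ?thesis unfolding fc_C_def gc_C_def
      by (simp add: divide_simps) (simp add: algebra_simps)
  qed
qed

lemma Gbar_eq_wavefunction: "Gbar t a b c d e f M N x u
    = wavefunction (\<lambda>w. (1-t)*d/(a*w+b)) (\<lambda>w. e*w+f) (\<lambda>p q. (p - t*q)/(p - q)) (\<lambda>A B. (t*A - B)/(A
        - t*B)) (\<lambda>w. (a*w+b)/(e*w+f)) M N x u"
  unfolding Gbar_def wavefunction_def by
      (simp add: times_divide_eq_left mult.commute mult.left_commute)

theorem C_product_on_vacuum:
  assumes sm: "strict_mono_on {1..N} x" and im: "x ` {1..N} \<subseteq> {1..M}" and g: "site_recursion.generic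
      generic_pair regular_point N u"
  shows "oplist M (map (\<lambda>j. Cop t a b c d e f M (u j)) [1..<N+1]) {} (x ` {1..N})
      = Gbar t a b c d e f M N x u"
proof -
  have m: "chain (\<lambda>w. coact M (mo M w True False)) (vacuum M) u N (x ` {1..N})
      = Gbar t a b c d e f M N x u"
    unfolding Gbar_eq_wavefunction by (rule site_recursion.site_chain_eq_wavefunction[OF
        site_recursion_C sm im g])
  have om: "\<forall>R\<in>Pow {1..M}. vacuum M R = (if R
      = {} then 1 else 0)" by (auto simp: vacuum_def Int_absorb2)
  have "\<forall>S\<in>Pow {1..M}. oplist M (map (\<lambda>j. mo M (u j) True False) [1..<N+1]) {} S
      = chain (\<lambda>w. coact M (mo M w True False)) (vacuum M) u N S"
    by (rule oplist_eq_chain_coact[OF om]) simp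
  then have "oplist M (map (\<lambda>j. mo M (u j) True False) [1..<N+1]) {} (x ` {1..N})
      = chain (\<lambda>w. coact M (mo M w True False)) (vacuum M) u N (x ` {1..N})"
    using im by auto
  then show ?thesis unfolding Cop_def m .
qed

definition "fc_B_full v w = (v - t*w)/(t*(v - w))"
definition "gc_B_full x y = (t - 1)*y/(t*(y - x))"

lemma exchange_algebra_B_full: "exchange_algebra (\<lambda>w. coact m (mo m w False True))
    (\<lambda>w. coact m (mo m w True True)) (filled m) fc_B_full gc_B_full (\<lambda>w. (e*w+t*f)^m) generic_pair"
proof (rule exchange_algebra.intro)
  show "coact m (mo m w False True) (\<lambda>S. \<Sum>k\<in>K. c k * \<phi> k S)
      = (\<lambda>S. \<Sum>k\<in>K. c k * coact m (mo m w False True) (\<phi> k) S)"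
    if "finite K" for K :: "nat set" and w c \<phi> using coact_sum[OF that] .
  show "coact m (mo m w2 False True) (\<lambda>S. c1 * \<phi>1 S + c2 * \<psi>1 S)
      = (\<lambda>S. c1 * coact m (mo m w2 False True) \<phi>1 S + c2 * coact m (mo m w2 False True) \<psi>1 S)"
    for w2 c1 \<phi>1 c2 \<psi>1 by (rule coact_lincomb)
  show "coact m (mo m v False True) (coact m (mo m w False True) \<phi>2)
      = coact m (mo m w False True) (coact m (mo m v False True) \<phi>2)"
    if "generic_pair v w" for v w \<phi>2
  proof -
    have "PP m v w False True False True S' S = PP m w v False True False True S' S" for S' S
      using BB_commute[OF rel1 rel2, of v w m S' S] BB_commute[OF rel1 rel2, of w v m S' S] that
          by (auto simp: generic_pair_def)
    then show ?thesis unfolding coact_coact_mono_pair by simp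
  qed
  show "coact m (mo m w True True) (coact m (mo m v False True) \<phi>2) =
      (\<lambda>S. fc_B_full v w * coact m (mo m v False True) (coact m (mo m w True True) \<phi>2) S
          + gc_B_full w v * coact m (mo m w False True) (coact m (mo m v True True) \<phi>2) S)"
    if "generic_pair v w" for v w \<phi>2
  proof -
    have "PP m v w False True True True S' S
        = fc_B_full v w * PP m w v True True False True S' S
            + gc_B_full w v * PP m v w True True False True S' S" for S' S
      unfolding fc_B_full_def gc_B_full_def
      by (rule solve_linear[OF _ BD_exchange[OF rel1 rel2]])
          (use that nzt in \<open>auto simp: generic_pair_def\<close>)
    then show ?thesis unfolding coact_coact_mono_pair by (rule coact_lincomb_kernel)
  qed
  show "coact m (mo m w True True) (filled m)
      = (\<lambda>S. (e*w+t*f)^m * filled m S)" for w by (rule coact_D_filled)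
  show "fc_B_full v w * gc_B_full w z + gc_B_full w v * gc_B_full v z
      = gc_B_full w z * fc_B_full v z" if "generic_pair v w" "generic_pair w z" "generic_pair v z"
          for v w z
  proof -
    have n: "w - v \<noteq> 0" "z - w \<noteq> 0" "z - v \<noteq> 0" "w - z \<noteq> 0" "v - z \<noteq> 0" "v
        - w \<noteq> 0" "t \<noteq> 0" using that nzt by (auto simp: generic_pair_def)
    show ?thesis unfolding fc_B_full_def gc_B_full_def
      using n by (simp add: divide_simps) (simp add: algebra_simps)
  qed
  show "generic_pair v w \<Longrightarrow> generic_pair w v" for v w by (rule generic_pair_sym)
qed

lemma site_recursion_B_full: "site_recursion (\<lambda>m w. coact m (mo m w False True))
    (\<lambda>m w. coact m (mo m w True True)) filled fc_B_full gc_B_full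
        (\<lambda>m w. (e*w+t*f)^m) generic_pair regular_point
   (\<lambda>w. a*t*w+b) (\<lambda>w. a*w+b) (\<lambda>w. (1-t)*c*w) (\<lambda>m S. Suc m \<notin> S) site_on site_off (\<lambda>m N x. {1..m}
       - x ` {1..N})
   (\<lambda>w. (1-t)*c*w/(e*w+t*f)) (\<lambda>w. (e*w+t*f)/(a*t*w+b)) (\<lambda>p q. (p - t*q)/(t*(p - q))) (\<lambda>A B. (t*A
       - B)/(A - t*B))"
proof (rule site_recursion.intro)
  show "exchange_algebra (\<lambda>w. coact m (mo m w False True))
      (\<lambda>w. coact m (mo m w True True)) (filled m) fc_B_full gc_B_full
          (\<lambda>w. (e*w+t*f)^m) generic_pair" for m
    by (rule exchange_algebra_B_full)
  show "local_on m (coact m (mo m w False True) \<phi>)" for m w \<phi> by (rule local_coact)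
  show "local_on m (coact m (mo m w True True) \<phi>)" for m w \<phi> by (rule local_coact)
  show "local_on m (filled m)" for m by (rule local_filled)
  show "coact m (mo m w True True) (\<lambda>S. c * \<phi> S)
      = (\<lambda>S. c * coact m (mo m w True True) \<phi> S)" for m w c \<phi> by (rule coact_smult)
  show "coact (Suc m) (mo (Suc m) w False True) \<phi>
      = (\<lambda>S. if Suc m \<notin> S then (a*w+b) * coact m (mo m w False True) (site_off m \<phi>) S
          + (1-t)*c*w * coact m (mo m w True True) (site_on m \<phi>) S
       else (a*t*w+b) * coact m (mo m w False True) (site_on m \<phi>) S)" for m w \<phi>
    by (rule ext) (simp add: coact_Suc bool_sum_def Lent_def)
  show "filled (Suc m) = (\<lambda>S. if Suc m \<notin> S then 0 else filled m S)" for m by (rule filled_Suc)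
  show "local_on m G0 \<Longrightarrow> local_on m G1 \<Longrightarrow> site_on m (\<lambda>S. if Suc m \<notin> S then G1 S else G0 S)
      = G0" for m G0 G1 by (rule site_on_if_notin)
  show "local_on m G0 \<Longrightarrow> local_on m G1 \<Longrightarrow> site_off m (\<lambda>S. if Suc m \<notin> S then G1 S else G0 S)
      = G1" for m G0 G1 by (rule site_off_if_notin)
  show "filled m ({1..m} - x ` {1..0}) = 1" for m and x :: "nat \<Rightarrow> nat" by (simp add: filled_def)
  show "strict_mono_on {1..Suc n} x \<Longrightarrow> x ` {1..Suc n} \<subseteq> {1..Suc m}
      \<Longrightarrow> (Suc m \<notin> {1..Suc m} - x ` {1..Suc n}) = (x (Suc n) = Suc m)"
    for n x m by (rule last_hole_at_site)
  show "x ` {1..N} \<subseteq> {1..m} \<Longrightarrow> ({1..Suc m} - x ` {1..N}) \<inter> {1..m}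
      = ({1..m} - x ` {1..N}) \<inter> {1..m}" for x N m by (rule holes_drop_site)
  show "strict_mono_on {1..Suc n} x \<Longrightarrow> x ` {1..Suc n} \<subseteq> {1..Suc m} \<Longrightarrow> x (Suc n) = Suc m \<Longrightarrow>
      ({1..Suc m} - x ` {1..Suc n}) \<inter> {1..m}
          = ({1..m} - x ` {1..n}) \<inter> {1..m}" for n x m by (rule holes_drop_last)
  show "(1-t)*c*w/(e*w+t*f) * (a*t*w+b)^Suc m * ((e*w+t*f)/(a*t*w+b))^Suc m
      = (1-t)*c*w * (e*w+t*f)^m" if "regular_point w" for w m
    using that by (intro power_ratio_cancel) (auto simp: regular_point_def)
  show "fc_B_full v w = (v - t*w)/(t*(v - w))" if "generic_pair v w"
      for v w unfolding fc_B_full_def ..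
  show "fc_B_full v w = (w - t*v)/(t*(w - v)) * ((t*w - v)/(w - t*v))" if "generic_pair v w" for v w
  proof -
    have n: "w - v \<noteq> 0" "v - w \<noteq> 0" "w - t*v \<noteq> 0" "t \<noteq> 0"
      using that nzt by (auto simp: generic_pair_def)
    then show ?thesis unfolding fc_B_full_def by (simp add: divide_simps) (simp add: algebra_simps)
  qed
  show "(a*v+b) * ((1-t)*c*w) + (a*t*w+b) * ((1-t)*c*v) * gc_B_full v w
      = (1-t)*c*w * (a*t*v+b) * fc_B_full v w"
          if "generic_pair v w" "regular_point v" "regular_point w" for v w
  proof -
    have n: "w - v \<noteq> 0" "v - w \<noteq> 0" "t \<noteq> 0" using that nzt by (auto simp: generic_pair_def)
    then show ?thesis unfolding fc_B_full_def gc_B_full_def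
      by (simp add: divide_simps) (simp add: algebra_simps)
  qed
qed

lemma Hfun_eq_wavefunction: "Hfun t a b c d e f M N x u
    = wavefunction (\<lambda>w. (1-t)*c*w/(e*w+t*f)) (\<lambda>w. a*t*w+b) (\<lambda>p q. (p - t*q)/(t*(p - q))) (\<lambda>A B. (t*A
        - B)/(A - t*B)) (\<lambda>w. (e*w+t*f)/(a*t*w+b)) M N x u"
  unfolding Hfun_def wavefunction_def by
      (simp add: times_divide_eq_left mult.commute mult.left_commute)

theorem B_product_on_filled:
  assumes sm: "strict_mono_on {1..N} x" and im: "x ` {1..N} \<subseteq> {1..M}" and g: "site_recursion.generic
      generic_pair regular_point N u"
  shows "oplist M (map (\<lambda>j. Bop t a b c d e f M (u j)) [1..<N+1]) {1..M} ({1..M} - x ` {1..N})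
      = Hfun t a b c d e f M N x u"
proof -
  have m: "chain (\<lambda>w. coact M (mo M w False True)) (filled M) u N ({1..M} - x ` {1..N})
      = Hfun t a b c d e f M N x u"
    unfolding Hfun_eq_wavefunction by (rule site_recursion.site_chain_eq_wavefunction[OF
        site_recursion_B_full sm im g])
  have om: "\<forall>R\<in>Pow {1..M}. filled M R = (if R = {1..M} then 1 else 0)" by (auto simp: filled_def)
  have "\<forall>S\<in>Pow {1..M}. oplist M (map (\<lambda>j. mo M (u j) False True) [1..<N+1]) {1..M} S
      = chain (\<lambda>w. coact M (mo M w False True)) (filled M) u N S"
    by (rule oplist_eq_chain_coact[OF om]) simp
  then have "oplist M (map (\<lambda>j. mo M (u j) False True) [1..<N+1]) {1..M} ({1..M} - x ` {1..N})
      = chain (\<lambda>w. coact M (mo M w False True)) (filled M) u N ({1..M} - x ` {1..N})"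
    by auto
  then show ?thesis unfolding Bop_def m .
qed

definition "fc_C_full v w = (w - t*v)/(t*(w - v))"
definition "gc_C_full x y = (t - 1)*x/(t*(x - y))"

lemma exchange_algebra_C_full: "exchange_algebra (\<lambda>w. act m (mo m w True False))
    (\<lambda>w. act m (mo m w False False)) (filled m) fc_C_full gc_C_full (\<lambda>w. (a*t*w+b)^m) generic_pair"
proof (rule exchange_algebra.intro)
  show "act m (mo m w True False) (\<lambda>S. \<Sum>k\<in>K. c k * \<phi> k S)
      = (\<lambda>S. \<Sum>k\<in>K. c k * act m (mo m w True False) (\<phi> k) S)"
    if "finite K" for K :: "nat set" and w c \<phi> using act_sum[OF that] .
  show "act m (mo m w2 True False) (\<lambda>S. c1 * \<phi>1 S + c2 * \<psi>1 S)
      = (\<lambda>S. c1 * act m (mo m w2 True False) \<phi>1 S + c2 * act m (mo m w2 True False) \<psi>1 S)"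
    for w2 c1 \<phi>1 c2 \<psi>1 by (rule act_lincomb)
  show "act m (mo m v True False) (act m (mo m w True False) \<phi>2)
      = act m (mo m w True False) (act m (mo m v True False) \<phi>2)"
    if "generic_pair v w" for v w \<phi>2
  proof -
    have "PP m v w True False True False S' S = PP m w v True False True False S' S" for S' S
      using CC_commute[OF rel1 rel2, of v w m S' S] CC_commute[OF rel1 rel2, of w v m S' S] that
          by (auto simp: generic_pair_def)
    then show ?thesis unfolding act_act_mono_pair by simp
  qed
  show "act m (mo m w False False) (act m (mo m v True False) \<phi>2) =
      (\<lambda>S. fc_C_full v w * act m (mo m v True False) (act m (mo m w False False) \<phi>2) S
          + gc_C_full w v * act m (mo m w True False) (act m (mo m v False False) \<phi>2) S)"
    if "generic_pair v w" for v w \<phi>2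
  proof -
    have "PP m w v False False True False S' S
        = fc_C_full v w * PP m v w True False False False S' S
            + gc_C_full w v * PP m w v True False False False S' S" for S' S
      unfolding fc_C_full_def gc_C_full_def
      by (rule solve_linear[OF _ AC_exchange[OF rel1 rel2]])
          (use that nzt in \<open>auto simp: generic_pair_def\<close>)
    then show ?thesis unfolding act_act_mono_pair by (rule act_lincomb_kernel)
  qed
  show "act m (mo m w False False) (filled m)
      = (\<lambda>S. (a*t*w+b)^m * filled m S)" for w by (rule act_A_filled)
  show "fc_C_full v w * gc_C_full w z + gc_C_full w v * gc_C_full v z
      = gc_C_full w z * fc_C_full v z" if "generic_pair v w" "generic_pair w z" "generic_pair v z"
          for v w z
  proof -
    have n: "w - v \<noteq> 0" "z - w \<noteq> 0" "z - v \<noteq> 0" "w - z \<noteq> 0" "v - z \<noteq> 0" "v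
        - w \<noteq> 0" "t \<noteq> 0" using that nzt by (auto simp: generic_pair_def)
    show ?thesis unfolding fc_C_full_def gc_C_full_def
      using n by (simp add: divide_simps) (simp add: algebra_simps)
  qed
  show "generic_pair v w \<Longrightarrow> generic_pair w v" for v w by (rule generic_pair_sym)
qed

lemma site_recursion_C_full: "site_recursion (\<lambda>m w. act m (mo m w True False))
    (\<lambda>m w. act m (mo m w False False)) filled fc_C_full gc_C_full
        (\<lambda>m w. (a*t*w+b)^m) generic_pair regular_point
   (\<lambda>w. e*w+t*f) (\<lambda>w. e*w+f) (\<lambda>w. (1-t)*d) (\<lambda>m S. Suc m \<notin> S) site_on site_off (\<lambda>m N x. {1..m}
       - x ` {1..N})
   (\<lambda>w. (1-t)*d/(a*t*w+b)) (\<lambda>w. (a*t*w+b)/(e*w+t*f)) (\<lambda>p q. (t*p - q)/(t*(p - q))) (\<lambda>A B. (A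
       - t*B)/(t*A - B))"
proof (rule site_recursion.intro)
  show "exchange_algebra (\<lambda>w. act m (mo m w True False))
      (\<lambda>w. act m (mo m w False False)) (filled m) fc_C_full gc_C_full
          (\<lambda>w. (a*t*w+b)^m) generic_pair" for m
    by (rule exchange_algebra_C_full)
  show "local_on m (act m (mo m w True False) \<phi>)" for m w \<phi> by (rule local_act)
  show "local_on m (act m (mo m w False False) \<phi>)" for m w \<phi> by (rule local_act)
  show "local_on m (filled m)" for m by (rule local_filled)
  show "act m (mo m w False False) (\<lambda>S. c * \<phi> S)
      = (\<lambda>S. c * act m (mo m w False False) \<phi> S)" for m w c \<phi> by (rule act_smult)
  show "act (Suc m) (mo (Suc m) w True False) \<phi>
      = (\<lambda>S. if Suc m \<notin> S then (e*w+f) * act m (mo m w True False) (site_off m \<phi>) S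
          + (1-t)*d * act m (mo m w False False) (site_on m \<phi>) S
       else (e*w+t*f) * act m (mo m w True False) (site_on m \<phi>) S)" for m w \<phi>
    by (rule ext) (simp add: act_Suc bool_sum_def Lent_def)
  show "filled (Suc m) = (\<lambda>S. if Suc m \<notin> S then 0 else filled m S)" for m by (rule filled_Suc)
  show "local_on m G0 \<Longrightarrow> local_on m G1 \<Longrightarrow> site_on m (\<lambda>S. if Suc m \<notin> S then G1 S else G0 S)
      = G0" for m G0 G1 by (rule site_on_if_notin)
  show "local_on m G0 \<Longrightarrow> local_on m G1 \<Longrightarrow> site_off m (\<lambda>S. if Suc m \<notin> S then G1 S else G0 S)
      = G1" for m G0 G1 by (rule site_off_if_notin)
  show "filled m ({1..m} - x ` {1..0}) = 1" for m and x :: "nat \<Rightarrow> nat" by (simp add: filled_def)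
  show "strict_mono_on {1..Suc n} x \<Longrightarrow> x ` {1..Suc n} \<subseteq> {1..Suc m}
      \<Longrightarrow> (Suc m \<notin> {1..Suc m} - x ` {1..Suc n}) = (x (Suc n) = Suc m)"
    for n x m by (rule last_hole_at_site)
  show "x ` {1..N} \<subseteq> {1..m} \<Longrightarrow> ({1..Suc m} - x ` {1..N}) \<inter> {1..m}
      = ({1..m} - x ` {1..N}) \<inter> {1..m}" for x N m by (rule holes_drop_site)
  show "strict_mono_on {1..Suc n} x \<Longrightarrow> x ` {1..Suc n} \<subseteq> {1..Suc m} \<Longrightarrow> x (Suc n) = Suc m \<Longrightarrow>
      ({1..Suc m} - x ` {1..Suc n}) \<inter> {1..m}
          = ({1..m} - x ` {1..n}) \<inter> {1..m}" for n x m by (rule holes_drop_last)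
  show "(1-t)*d/(a*t*w+b) * (e*w+t*f)^Suc m * ((a*t*w+b)/(e*w+t*f))^Suc m
      = (1-t)*d * (a*t*w+b)^m" if "regular_point w" for w m
    using that by (intro power_ratio_cancel) (auto simp: regular_point_def)
  show "fc_C_full v w = (t*v - w)/(t*(v - w))" if "generic_pair v w" for v w
  proof -
    have n: "w - v \<noteq> 0" "v - w \<noteq> 0" "t \<noteq> 0" using that nzt by (auto simp: generic_pair_def)
    then show ?thesis unfolding fc_C_full_def by (simp add: divide_simps) (simp add: algebra_simps)
  qed
  show "fc_C_full v w = (t*w - v)/(t*(w - v)) * ((w - t*v)/(t*w - v))" if "generic_pair v w" for v w
  proof -
    have n: "w - v \<noteq> 0" "v - w \<noteq> 0" "t*w
        - v \<noteq> 0" "t \<noteq> 0" using that nzt by (auto simp: generic_pair_def)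
    then show ?thesis unfolding fc_C_full_def by (simp add: divide_simps)
  qed
  show "(e*v+f) * ((1-t)*d) + (e*w+t*f) * ((1-t)*d) * gc_C_full v w
      = (1-t)*d * (e*v+t*f) * fc_C_full v w"
          if "generic_pair v w" "regular_point v" "regular_point w" for v w
  proof -
    have n: "w - v \<noteq> 0" "v - w \<noteq> 0" "t \<noteq> 0" using that nzt by (auto simp: generic_pair_def)
    then show ?thesis unfolding fc_C_full_def gc_C_full_def
      by (simp add: divide_simps) (simp add: algebra_simps)
  qed
qed

lemma Hbar_eq_wavefunction: "Hbar t a b c d e f M N x u
    = wavefunction (\<lambda>w. (1-t)*d/(a*t*w+b)) (\<lambda>w. e*w+t*f) (\<lambda>p q. (t*p - q)/(t*(p - q))) (\<lambda>A B. (A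
        - t*B)/(t*A - B)) (\<lambda>w. (a*t*w+b)/(e*w+t*f)) M N x u"
  unfolding Hbar_def wavefunction_def by
      (simp add: times_divide_eq_left mult.commute mult.left_commute)

theorem C_product_on_filled:
  assumes sm: "strict_mono_on {1..N} x" and im: "x ` {1..N} \<subseteq> {1..M}" and g: "site_recursion.generic
      generic_pair regular_point N u"
  shows "oplist M (map (\<lambda>j. Cop t a b c d e f M (u j)) (rev [1..<N+1])) ({1..M} - x ` {1..N}) {1..M}
      = Hbar t a b c d e f M N x u"
proof -
  have m: "chain (\<lambda>w. act M (mo M w True False)) (filled M) u N ({1..M} - x ` {1..N})
      = Hbar t a b c d e f M N x u"
    unfolding Hbar_eq_wavefunction by (rule site_recursion.site_chain_eq_wavefunction[OF
        site_recursion_C_full sm im g])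
  have om: "\<forall>R\<in>Pow {1..M}. filled M R = (if R = {1..M} then 1 else 0)" by (auto simp: filled_def)
  have "\<forall>S'\<in>Pow {1..M}. oplist M (map (\<lambda>j. mo M (u j) True False) (rev [1..<N+1])) S' {1..M}
      = chain (\<lambda>w. act M (mo M w True False)) (filled M) u N S'"
    by (rule oplist_eq_chain_act[OF om])
  then have "oplist M (map (\<lambda>j. mo M (u j) True False) (rev [1..<N+1])) ({1..M} - x ` {1..N}) {1..M}
      = chain (\<lambda>w. act M (mo M w True False)) (filled M) u N ({1..M} - x ` {1..N})"
    by auto
  then show ?thesis unfolding Cop_def m .
qed

lemma generic_of_assms:
  assumes inj: "inj_on u {1..N}"
    and gt: "\<And>j k. j \<in> {1..N} \<Longrightarrow> k \<in> {1..N} \<Longrightarrow> j \<noteq> k \<Longrightarrow> t * u j - u k \<noteq> 0"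
    and gl: "\<And>j. j \<in> {1..N} \<Longrightarrow> a * u j + b \<noteq> 0 \<and> e * u j + f \<noteq> 0 \<and> a * t * u j + b \<noteq> 0 \<and> e * u j
        + t * f \<noteq> 0"
  shows "site_recursion.generic generic_pair regular_point N u"
proof -
  have A: "generic_pair (u i) (u j)" if i: "i \<in> {1..N}" and j: "j \<in> {1..N}" and ij: "i \<noteq> j" for i j
  proof -
    have "u i \<noteq> u j" using inj i j ij by (auto dest: inj_onD)
    moreover have "t * u i \<noteq> u j" using gt[OF i j ij] by simp
    moreover have "t * u j \<noteq> u i" using gt[OF j i] ij by simp
    ultimately show ?thesis by (simp add: generic_pair_def)
  qed
  have B: "regular_point (u i)" if "i \<in> {1..N}" for i
    using gl[OF that] by (simp add: regular_point_def)
  show ?thesis unfolding site_recursion.generic_def[OF site_recursion_B] using A B by blast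
qed

end

theorem theorem1:
  fixes t a b c d e f :: complex and M N :: nat
    and x xb :: "nat \<Rightarrow> nat" and u :: "nat \<Rightarrow> complex"
  assumes nz: "t \<noteq> 0" "a \<noteq> 0" "b \<noteq> 0" "c \<noteq> 0" "d \<noteq> 0" "e \<noteq> 0" "f \<noteq> 0"
    and t1: "t \<noteq> 1"
    and rel1: "c*d + a*f = 0" and rel2: "t*c*d + b*e = 0"
    and MN: "1 \<le> M" "1 \<le> N" "N \<le> M"
    and x: "strict_mono_on {1..N} x" "x ` {1..N} \<subseteq> {1..M}"
    and xb: "strict_mono_on {1..N} xb" "xb ` {1..N} \<subseteq> {1..M}"
    \<comment> \<open>generic spectral parameters: all denominators occurring are nonzero\<close>
    and gen_inj: "inj_on u {1..N}"
    and gen_t: "\<And>j k. j \<in> {1..N} \<Longrightarrow> k \<in> {1..N} \<Longrightarrow> j \<noteq> k \<Longrightarrow> t * u j - u k \<noteq> 0"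
    and gen_lin: "\<And>j. j \<in> {1..N} \<Longrightarrow>
        a * u j + b \<noteq> 0 \<and> e * u j + f \<noteq> 0 \<and> a * t * u j + b \<noteq> 0 \<and> e * u j + t * f \<noteq> 0"
  shows
   "(oplist M (map (\<lambda>j. Bop t a b c d e f M (u j)) (rev [1..<N+1])) (x ` {1..N}) {}
      = Gfun t a b c d e f M N x u) \<and>
    (oplist M (map (\<lambda>j. Cop t a b c d e f M (u j)) [1..<N+1]) {} (x ` {1..N})
      = Gbar t a b c d e f M N x u) \<and>
    (oplist M (map (\<lambda>j. Bop t a b c d e f M (u j)) [1..<N+1]) {1..M} ({1..M} - xb ` {1..N})
      = Hfun t a b c d e f M N xb u) \<and>
    (oplist M (map (\<lambda>j. Cop t a b c d e f M (u j)) (rev [1..<N+1])) ({1..M} - xb ` {1..N}) {1..M}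
      = Hbar t a b c d e f M N xb u)"
proof -
  have g: "site_recursion.generic (generic_pair t) (regular_point t a b e f) N u"
    by (rule generic_of_assms[OF nz(1) rel1 rel2 gen_inj gen_t gen_lin])
  show ?thesis
    using B_product_on_vacuum[OF nz(1) rel1 rel2 x g] C_product_on_vacuum[OF nz(1) rel1 rel2 x g]
      B_product_on_filled[OF nz(1) rel1 rel2 xb g] C_product_on_filled[OF nz(1) rel1 rel2 xb g]
    by blast
qed
end
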